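(* Fix $k\in\{0,\dots,d\}$, $m\in\mathbb N$, $h_0>0$, and put $\mu_1=2\pi/h_0$. Let $x_i=a_0+a\,i$, $i\in\mathbb N$, with $a_0\ge0$, $a>0$ such that $aj/h_0\notin\mathbb Z$ for $j=1,\dots,2m$. Suppose $$y_{ki}=\beta_k+s\,x_i+\sum_{j=1}^m\big(\alpha_j\cos(\mu_1jx_i)-\gamma_j\sin(\mu_1jx_i)\big)+\delta_{ki},\qquad i\in\mathbb N,$$ with unknown parameter $\beta=(\beta_k,s,\alpha_1,\dots,\alpha_m,\gamma_1,\dots,\gamma_m)^\top\in\mathbb R^{2m+2}$ and errors $\delta_{ki}$ of mean zero and finite positive variance whose covariance matrices $Q_n$ of $(\delta_{k1},\dots,\delta_{kn})$ satisfy $0<\inf_n\nu_{\min}(Q_n)\le\sup_n\nu_{\max}(Q_n)<\infty$. For $n\ge2m+2$ let $\hat\beta^{(n)}$ be the ordinary least squares estimator of $\beta$ from $y_{k1},\dots,y_{kn}$. Then $\hat\beta^{(n)}$ is weakly consistent: $P(|\hat\beta^{(n)}-\beta|>\varepsilon)\to0$ as $n\to\infty$ for every $\varepsilon>0$.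
   Context: This is the regression model of the second method: it arises for $F\subset\mathbb R^d$ satisfying (A1), (A2) and (A3'), where (A3') says there is $h\in(0,1)$ such that for each $k$, $\varepsilon^{s-k}C_k(F_\varepsilon)\sim p_k(\varepsilon)$ as $\varepsilon\searrow0$ for a bounded function $p_k$ with $p_k(h\varepsilon)=p_k(\varepsilon)$; then $h_0=-\log h$, $\beta_k=\frac1{h_0}\int_0^{h_0}\log|p_k(e^{-x})|\,dx$, $f_k(x)=\log|p_k(e^{-x})|-\beta_k$ is assumed to be the trigonometric polynomial $\sum_{j=1}^m(\alpha_j\cos(\mu_1jx)-\gamma_j\sin(\mu_1jx))$, and $y_{ki}=\log(\varepsilon_i^{-k}|C_k(F_{\varepsilon_i})|)$ with $x_i=-\log\varepsilon_i$. $\nu_{\min},\nu_{\max}$ denote extreme eigenvalues. *)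

theory Defs
  imports "HOL-Probability.Probability" "Jordan_Normal_Form.Char_Poly"
begin

(* Regressor j (0 \<le> j < 2m+2) evaluated at x, ordered as the parameter vector
   (beta_k, s, alpha_1..alpha_m, gamma_1..gamma_m):
   1, x, cos(mu1 j x) (j=1..m), -sin(mu1 j x) (j=1..m). *)
definition regressor :: "nat \<Rightarrow> real \<Rightarrow> real \<Rightarrow> nat \<Rightarrow> real" where
  "regressor m mu1 x j =
     (if j = 0 then 1
      else if j = 1 then x
      else if j \<le> m + 1 then cos (mu1 * real (j - 1) * x)
      else - sin (mu1 * real (j - m - 1) * x))"

definition param_vec :: "nat \<Rightarrow> real \<Rightarrow> real \<Rightarrow> (nat \<Rightarrow> real) \<Rightarrow> (nat \<Rightarrow> real) \<Rightarrow> nat \<Rightarrow> real" where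
  "param_vec m bk s \<alpha> \<gamma> j =
     (if j = 0 then bk
      else if j = 1 then s
      else if j \<le> m + 1 then \<alpha> (j - 1)
      else if j \<le> 2 * m + 1 then \<gamma> (j - m - 1)
      else 0)"

definition RSS :: "nat \<Rightarrow> real \<Rightarrow> (nat \<Rightarrow> real) \<Rightarrow> (nat \<Rightarrow> real) \<Rightarrow> nat \<Rightarrow> (nat \<Rightarrow> real) \<Rightarrow> real" where
  "RSS m mu1 x y n b = (\<Sum>i=1..n. (y i - (\<Sum>j<2*m+2. b j * regressor m mu1 (x i) j))\<^sup>2)"

(* ordinary least squares estimator: the minimiser of RSS over R^(2m+2)
   (vectors represented as functions vanishing from index 2m+2 on) *)
definition OLS :: "nat \<Rightarrow> real \<Rightarrow> (nat \<Rightarrow> real) \<Rightarrow> (nat \<Rightarrow> real) \<Rightarrow> nat \<Rightarrow> nat \<Rightarrow> real" where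
  "OLS m mu1 x y n = (THE b. (\<forall>j\<ge>2*m+2. b j = 0) \<and>
      (\<forall>c. (\<forall>j\<ge>2*m+2. c j = 0) \<longrightarrow> RSS m mu1 x y n b \<le> RSS m mu1 x y n c))"

definition pdist :: "nat \<Rightarrow> (nat \<Rightarrow> real) \<Rightarrow> (nat \<Rightarrow> real) \<Rightarrow> real" where
  "pdist m b c = sqrt (\<Sum>j<2*m+2. (b j - c j)\<^sup>2)"

definition covar :: "'a measure \<Rightarrow> ('a \<Rightarrow> real) \<Rightarrow> ('a \<Rightarrow> real) \<Rightarrow> real" where
  "covar M X Y = (\<integral>\<omega>. (X \<omega> - (\<integral>\<omega>'. X \<omega>' \<partial>M)) * (Y \<omega> - (\<integral>\<omega>'. Y \<omega>' \<partial>M)) \<partial>M)"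

definition cov_mat :: "'a measure \<Rightarrow> (nat \<Rightarrow> 'a \<Rightarrow> real) \<Rightarrow> nat \<Rightarrow> real mat" where
  "cov_mat M \<delta> n = mat n n (\<lambda>(i, j). covar M (\<delta> (i + 1)) (\<delta> (j + 1)))"

end

theory Submission
  imports Defs "HOL-Real_Asymp.Real_Asymp"
begin

(* Write the least squares error as e = OLS - beta and scale the columns of the design
   (1, x_i, cos, -sin) by s_1 = a n^(3/2) for x_i and s_l = sqrt n otherwise. The normal equations give
   |X e|^2 = <X e, delta>. Dirichlet-kernel bounds for sums of cos(theta k i + phi), 0 < |k| <= 2m,
   which are bounded because a k / h0 is never an integer, show that the scaled Gram matrix tends to
   the block-diagonal matrix with the 2x2 Hilbert matrix and I/2; hence |X e|^2 >= |S e|^2 / 40 for large n,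
   and |S e|^2 <= 1600 |S^-1 X^T delta|^2. The covariance eigenvalue bound controls
   E |S^-1 X^T delta|^2 <= C tr(S^-1 X^T X S^-1) = O(1), so E |e|^2 = O(1/n) and Markov's inequality
   gives consistency. *)

section \<open>Trigonometric sums\<close>

lemma sin_half_mult_sum_cos:
  "2 * sin (t/2) * (\<Sum>i=1..n. cos (t * real i + p)) = sin (t * real n + p + t/2) - sin (p + t/2)"
proof (induction n)
  case 0 show ?case by simp
next
  case (Suc n)
  have e: "((t * real (Suc n) + p + t/2) - (t * real n + p + t/2))/2 = t/2"
     "((t * real (Suc n) + p + t/2) + (t * real n + p + t/2))/2 = t * real (Suc n) + p"
    by (simp_all add: algebra_simps)
  have "sin (t * real (Suc n) + p + t/2) - sin (t * real n + p + t/2) = 2 * sin (t/2) * cos (t * real (Suc n) + p)"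
    unfolding sin_diff_sin e ..
  then show ?case using Suc by (simp add: algebra_simps)
qed

lemma abs_sum_cos_le:
  assumes "sin (t/2) \<noteq> 0"
  shows "\<bar>\<Sum>i=1..n. cos (t * real i + p)\<bar> \<le> 1 / \<bar>sin (t/2)\<bar>"
proof -
  have "\<bar>sin (t * real n + p + t/2) - sin (p + t/2)\<bar> \<le> 2"
    using abs_sin_le_one[of "t * real n + p + t/2"] abs_sin_le_one[of "p + t/2"] by linarith
  then have "\<bar>sin (t/2)\<bar> * \<bar>\<Sum>i=1..n. cos (t * real i + p)\<bar> \<le> 1"
    unfolding sin_half_mult_sum_cos[symmetric] by (simp add: abs_mult)
  then show ?thesis using assms by (simp add: field_simps)
qed

lemma sum_index_mult_eq:
  "(\<Sum>i=1..n. real i * c i) = real n * (\<Sum>i=1..n. c i) - (\<Sum>k<n. \<Sum>i=1..k. c i)"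
  by (induction n) (simp_all add: algebra_simps)

lemma abs_sum_index_mult_le:
  assumes "\<And>k. \<bar>\<Sum>i=1..k. c i\<bar> \<le> B"
  shows "\<bar>\<Sum>i=1..n. real i * c i\<bar> \<le> 2 * real n * B"
proof -
  have "\<bar>\<Sum>k<n. \<Sum>i=1..k. c i\<bar> \<le> real n * B"
    using order_trans[OF sum_abs sum_mono[of "{..<n}" _ "\<lambda>_. B"]] assms by simp
  moreover have "\<bar>real n * (\<Sum>i=1..n. c i)\<bar> \<le> real n * B"
    using assms[of n] by (simp add: abs_mult mult_left_mono)
  ultimately show ?thesis unfolding sum_index_mult_eq by linarith
qed

lemma mean_cos_tendsto_0:
  assumes "sin (t/2) \<noteq> 0"
  shows "(\<lambda>n. (\<Sum>i=1..n. cos (t * real i + p)) / real n) \<longlonglongrightarrow> 0"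
proof (rule Lim_null_comparison)
  show "\<forall>\<^sub>F n in sequentially. norm ((\<Sum>i=1..n. cos (t * real i + p)) / real n) \<le> 1 / \<bar>sin (t/2)\<bar> / real n"
    using divide_right_mono[OF abs_sum_cos_le[OF assms], of "real n" for n] by (intro always_eventually) simp
  show "(\<lambda>n. 1 / \<bar>sin (t/2)\<bar> / real n) \<longlonglongrightarrow> 0" by real_asymp
qed

lemma weighted_mean_cos_tendsto_0:
  assumes "sin (t/2) \<noteq> 0"
  shows "(\<lambda>n. (\<Sum>i=1..n. real i * cos (t * real i + p)) / (real n * real n)) \<longlonglongrightarrow> 0"
proof (rule Lim_null_comparison)
  let ?B = "1 / \<bar>sin (t/2)\<bar>"
  show "\<forall>\<^sub>F n in sequentially.
      norm ((\<Sum>i=1..n. real i * cos (t * real i + p)) / (real n * real n)) \<le> 2 * ?B / real n"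
  proof (intro always_eventually allI)
    fix n
    have "\<bar>\<Sum>i=1..n. real i * cos (t * real i + p)\<bar> / (real n * real n) \<le> 2 * real n * ?B / (real n * real n)"
      by (intro divide_right_mono abs_sum_index_mult_le abs_sum_cos_le[OF assms]) simp
    also have "\<dots> = 2 * ?B / real n" by simp
    finally show "norm ((\<Sum>i=1..n. real i * cos (t * real i + p)) / (real n * real n)) \<le> 2 * ?B / real n"
      by simp
  qed
  show "(\<lambda>n. 2 * ?B / real n) \<longlonglongrightarrow> 0" by real_asymp
qed

lemma mean_const_tendsto: "(\<lambda>n. (\<Sum>i=1..n. c) / real n) \<longlonglongrightarrow> (c :: real)"
proof -
  have "\<forall>\<^sub>F n in sequentially. c = (\<Sum>i=1..n. c) / real n"
    using eventually_gt_at_top[of 0] by eventually_elim auto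
  then show ?thesis by (rule Lim_transform_eventually[OF tendsto_const])
qed

section \<open>Quadratic forms\<close>

definition quad_form :: "nat \<Rightarrow> (nat \<Rightarrow> nat \<Rightarrow> real) \<Rightarrow> (nat \<Rightarrow> real) \<Rightarrow> real" where
  "quad_form n q v = (\<Sum>i<n. \<Sum>j<n. v i * q i j * v j)"

definition sqnorm :: "nat \<Rightarrow> (nat \<Rightarrow> real) \<Rightarrow> real" where
  "sqnorm n v = (\<Sum>i<n. (v i)\<^sup>2)"

lemma quad_form_scale: "quad_form n q (\<lambda>i. c * v i) = c\<^sup>2 * quad_form n q v"
  unfolding quad_form_def sum_distrib_left by (simp add: power2_eq_square mult_ac)

lemma sqnorm_scale: "sqnorm n (\<lambda>i. c * v i) = c\<^sup>2 * sqnorm n v"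
  unfolding sqnorm_def sum_distrib_left by (simp add: power2_eq_square mult_ac)

lemma quad_form_cong: "(\<And>i. i < n \<Longrightarrow> v i = w i) \<Longrightarrow> quad_form n q v = quad_form n q w"
  unfolding quad_form_def by (intro sum.cong refl) auto

lemma sqnorm_cong: "(\<And>i. i < n \<Longrightarrow> v i = w i) \<Longrightarrow> sqnorm n v = sqnorm n w"
  unfolding sqnorm_def by (intro sum.cong refl) auto

lemma sqnorm_nonneg: "0 \<le> sqnorm n v"
  unfolding sqnorm_def by (intro sum_nonneg) simp

lemma sqnorm_eq_0_iff: "sqnorm n v = 0 \<longleftrightarrow> (\<forall>i<n. v i = 0)"
  unfolding sqnorm_def by (subst sum_nonneg_eq_0_iff) auto

lemma quad_form_add:
  assumes sym: "\<forall>i<n. \<forall>j<n. q i j = q j i"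
  shows "quad_form n q (\<lambda>i. u i + t * h i)
    = quad_form n q u + 2 * t * (\<Sum>i<n. h i * (\<Sum>j<n. q i j * u j)) + t\<^sup>2 * quad_form n q h"
proof -
  have cross: "(\<Sum>i<n. \<Sum>j<n. u i * q i j * h j) = (\<Sum>i<n. h i * (\<Sum>j<n. q i j * u j))"
  proof -
    have "(\<Sum>i<n. \<Sum>j<n. u i * q i j * h j) = (\<Sum>j<n. \<Sum>i<n. u i * q i j * h j)" by (rule sum.swap)
    also have "\<dots> = (\<Sum>j<n. h j * (\<Sum>i<n. q j i * u i))"
      unfolding sum_distrib_left using sym by (intro sum.cong refl) (simp add: mult_ac)
    finally show ?thesis .
  qed
  have "quad_form n q (\<lambda>i. u i + t * h i) = (\<Sum>i<n. \<Sum>j<n. u i * q i j * u j + t * (u i * q i j * h j)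
      + t * (h i * q i j * u j) + t\<^sup>2 * (h i * q i j * h j))"
    unfolding quad_form_def by (intro sum.cong refl) (simp add: algebra_simps power2_eq_square)
  also have "\<dots> = quad_form n q u + t * (\<Sum>i<n. \<Sum>j<n. u i * q i j * h j)
      + t * (\<Sum>i<n. h i * (\<Sum>j<n. q i j * u j)) + t\<^sup>2 * quad_form n q h"
    unfolding quad_form_def by (simp add: sum.distrib sum_distrib_left mult_ac)
  finally show ?thesis unfolding cross by simp
qed

lemma sqnorm_add:
  "sqnorm n (\<lambda>i. u i + t * h i) = sqnorm n u + 2 * t * (\<Sum>i<n. h i * u i) + t\<^sup>2 * sqnorm n h"
proof -
  have "sqnorm n (\<lambda>i. u i + t * h i) = (\<Sum>i<n. (u i)\<^sup>2 + 2 * t * (h i * u i) + t\<^sup>2 * (h i)\<^sup>2)"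
    unfolding sqnorm_def by (intro sum.cong refl) (simp add: algebra_simps power2_eq_square)
  then show ?thesis
    unfolding sqnorm_def by (simp add: sum.distrib sum_distrib_left)
qed

lemma linear_coeff_eq_0_if_nonpos:
  fixes g c :: real
  assumes "\<And>t. 2 * t * g + t\<^sup>2 * c \<le> 0"
  shows "g = 0"
proof (rule ccontr)
  assume g: "g \<noteq> 0"
  define d where "d = \<bar>c\<bar> + 1"
  have d: "d > 0" "c / d > -1" unfolding d_def by (simp_all add: field_simps)
  have "2 * (g / d) * g + (g / d)\<^sup>2 * c = g\<^sup>2 / d * (2 + c / d)"
    using d by (simp add: field_simps power2_eq_square)
  also have "\<dots> > 0" using g d by (intro mult_pos_pos) simp_all
  finally show False using assms[of "g / d"] by simp
qed

lemma compact_unit_sphere_fun: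
  "compact {v :: nat \<Rightarrow> real. (\<forall>i\<ge>n. v i = 0) \<and> sqnorm n v = 1}"
proof -
  define K where "K = PiE UNIV (\<lambda>i. if i < n then {-1..1::real} else {0})"
  have "compactin (product_topology (\<lambda>i. euclidean) UNIV) K"
    unfolding K_def compactin_PiE by auto
  then have cK: "compact K" unfolding euclidean_product_topology compactin_euclidean_iff .
  have cl: "closed {v :: nat \<Rightarrow> real. sqnorm n v = 1}"
    unfolding sqnorm_def by (intro closed_Collect_eq continuous_intros continuous_on_product_coordinates)
  have "{v :: nat \<Rightarrow> real. (\<forall>i\<ge>n. v i = 0) \<and> sqnorm n v = 1} = K \<inter> {v. sqnorm n v = 1}"
  proof (intro equalityI subsetI)
    fix v assume v: "v \<in> {v :: nat \<Rightarrow> real. (\<forall>i\<ge>n. v i = 0) \<and> sqnorm n v = 1}"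
    have "\<bar>v i\<bar> \<le> 1" if "i < n" for i
    proof -
      have "(v i)\<^sup>2 \<le> sqnorm n v" unfolding sqnorm_def by (rule member_le_sum) (use that in auto)
      then show ?thesis using v abs_le_square_iff[of "v i" 1] by simp
    qed
    then show "v \<in> K \<inter> {v. sqnorm n v = 1}" using v unfolding K_def PiE_def by (auto simp: abs_le_iff)
  qed (auto simp: K_def PiE_def split: if_splits)
  then show ?thesis using compact_Int_closed[OF cK cl] by simp
qed

lemma quad_form_le_max_on_sphere:
  assumes "\<And>w. (\<forall>i\<ge>n. w i = 0) \<Longrightarrow> sqnorm n w = 1 \<Longrightarrow> quad_form n q w \<le> lam"
  shows "quad_form n q v \<le> lam * sqnorm n v"
proof (cases "sqnorm n v = 0")
  case True
  then have "\<forall>i<n. v i = 0" by (simp add: sqnorm_eq_0_iff)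
  with True show ?thesis by (simp add: quad_form_def)
next
  case False
  then have pos: "sqnorm n v > 0" using sqnorm_nonneg[of n v] by simp
  define c where "c = 1 / sqrt (sqnorm n v)"
  have c2: "c\<^sup>2 * sqnorm n v = 1" unfolding c_def using pos by (simp add: power_divide)
  define w where "w i = (if i < n then c * v i else 0)" for i
  have "sqnorm n w = c\<^sup>2 * sqnorm n v"
    unfolding sqnorm_scale[symmetric] by (rule sqnorm_cong) (simp add: w_def)
  then have "quad_form n q w \<le> lam" using c2 by (intro assms) (simp_all add: w_def)
  moreover have "quad_form n q w = c\<^sup>2 * quad_form n q v"
    unfolding quad_form_scale[symmetric] by (rule quad_form_cong) (simp add: w_def)
  ultimately have "(c\<^sup>2 * quad_form n q v) * sqnorm n v \<le> lam * sqnorm n v"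
    by (intro mult_right_mono sqnorm_nonneg) simp
  also have "(c\<^sup>2 * quad_form n q v) * sqnorm n v = quad_form n q v"
    using c2 by (metis mult.assoc mult.commute mult_1_right)
  finally show ?thesis .
qed

text \<open>A maximiser of a symmetric quadratic form on the unit sphere is an eigenvector: the first
  variation of the Rayleigh quotient vanishes there.\<close>

lemma quad_form_maximiser_eigenvector:
  assumes sym: "\<forall>i<n. \<forall>j<n. q i j = q j i"
    and bound: "\<And>w. quad_form n q w \<le> lam * sqnorm n w"
    and u: "sqnorm n u = 1" "quad_form n q u = lam"
  shows "\<forall>i<n. (\<Sum>j<n. q i j * u j) = lam * u i"
proof -
  define r where "r i = (\<Sum>j<n. q i j * u j) - lam * u i" for i
  define h where "h i = (if i < n then r i else 0)" for i
  have "2 * t * (\<Sum>i<n. h i * r i) + t\<^sup>2 * (quad_form n q h - lam * sqnorm n h) \<le> 0" for t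
    using bound[of "\<lambda>i. u i + t * h i"]
    unfolding quad_form_add[OF sym] sqnorm_add u r_def
    by (simp add: algebra_simps sum_subtractf sum_distrib_left)
  then have "(\<Sum>i<n. h i * r i) = 0" by (rule linear_coeff_eq_0_if_nonpos)
  then have "sqnorm n r = 0" by (simp add: h_def sqnorm_def power2_eq_square)
  then show ?thesis unfolding sqnorm_eq_0_iff r_def by simp
qed

lemma quad_form_le_eigenvalue_bound:
  fixes q :: "nat \<Rightarrow> nat \<Rightarrow> real"
  assumes sym: "\<forall>i<n. \<forall>j<n. q i j = q j i"
    and ev: "\<And>lam v. (\<exists>j<n. v j \<noteq> 0) \<Longrightarrow> (\<forall>i<n. (\<Sum>j<n. q i j * v j) = lam * v i) \<Longrightarrow> lam \<le> C"
  shows "quad_form n q v \<le> C * sqnorm n v"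
proof (cases "n = 0")
  case True then show ?thesis by (simp add: quad_form_def sqnorm_def)
next
  case False
  define S where "S = {v :: nat \<Rightarrow> real. (\<forall>i\<ge>n. v i = 0) \<and> sqnorm n v = 1}"
  have "sqnorm n (\<lambda>i. if i = 0 then 1 else 0) = (\<Sum>i<n. if i = 0 then 1 else 0)"
    unfolding sqnorm_def by (rule sum.cong) auto
  also have "\<dots> = 1" using False by simp
  finally have "S \<noteq> {}" using False unfolding S_def by (auto intro!: exI[of _ "\<lambda>i. if i = 0 then 1 else 0"])
  moreover have "continuous_on S (quad_form n q)"
    unfolding quad_form_def
    by (intro continuous_intros continuous_on_subset[OF continuous_on_product_coordinates]) simp_all
  ultimately obtain u where u: "u \<in> S" and umax: "\<And>w. w \<in> S \<Longrightarrow> quad_form n q w \<le> quad_form n q u"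
    using continuous_attains_sup[OF compact_unit_sphere_fun[of n, folded S_def]] by blast
  have bound: "quad_form n q w \<le> quad_form n q u * sqnorm n w" for w
    by (rule quad_form_le_max_on_sphere) (use umax in \<open>simp add: S_def\<close>)
  have u1: "sqnorm n u = 1" using u unfolding S_def by simp
  then have "\<exists>j<n. u j \<noteq> 0" using sqnorm_eq_0_iff[of n u] by auto
  then have "quad_form n q u \<le> C"
    using quad_form_maximiser_eigenvector[OF sym bound u1 refl] by (rule ev)
  then show ?thesis using bound[of v] sqnorm_nonneg[of n v] by (meson mult_right_mono order_trans)
qed

section \<open>Second moments of linear combinations of the errors\<close>

lemma integrable_mult_if_square_integrable:
  fixes f g :: "'a \<Rightarrow> real"
  assumes "f \<in> borel_measurable M" "g \<in> borel_measurable M"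
    and "integrable M (\<lambda>\<omega>. (f \<omega>)\<^sup>2)" "integrable M (\<lambda>\<omega>. (g \<omega>)\<^sup>2)"
  shows "integrable M (\<lambda>\<omega>. f \<omega> * g \<omega>)"
proof (rule Bochner_Integration.integrable_bound)
  show "integrable M (\<lambda>\<omega>. (f \<omega>)\<^sup>2 + (g \<omega>)\<^sup>2)" using assms by simp
  show "(\<lambda>\<omega>. f \<omega> * g \<omega>) \<in> borel_measurable M" using assms by measurable
  have "\<bar>f \<omega>\<bar> * \<bar>g \<omega>\<bar> \<le> (f \<omega>)\<^sup>2 + (g \<omega>)\<^sup>2" for \<omega>
  proof -
    have "2 * (\<bar>f \<omega>\<bar> * \<bar>g \<omega>\<bar>) \<le> (f \<omega>)\<^sup>2 + (g \<omega>)\<^sup>2"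
      using sum_squares_bound[of "\<bar>f \<omega>\<bar>" "\<bar>g \<omega>\<bar>"] by simp
    moreover have "0 \<le> \<bar>f \<omega>\<bar> * \<bar>g \<omega>\<bar>" by simp
    ultimately show ?thesis by linarith
  qed
  then show "AE \<omega> in M. norm (f \<omega> * g \<omega>) \<le> norm ((f \<omega>)\<^sup>2 + (g \<omega>)\<^sup>2)"
    by (simp add: abs_mult)
qed

lemma integral_square_sum:
  fixes D :: "nat \<Rightarrow> 'a \<Rightarrow> real"
  assumes "finite I"
    and meas: "\<And>i. i \<in> I \<Longrightarrow> D i \<in> borel_measurable M"
    and sq: "\<And>i. i \<in> I \<Longrightarrow> integrable M (\<lambda>\<omega>. (D i \<omega>)\<^sup>2)"
  shows "integrable M (\<lambda>\<omega>. (\<Sum>i\<in>I. v i * D i \<omega>)\<^sup>2)"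
    and "(\<integral>\<omega>. (\<Sum>i\<in>I. v i * D i \<omega>)\<^sup>2 \<partial>M) = (\<Sum>i\<in>I. \<Sum>j\<in>I. v i * v j * (\<integral>\<omega>. D i \<omega> * D j \<omega> \<partial>M))"
proof -
  have eq: "(\<Sum>i\<in>I. v i * D i \<omega>)\<^sup>2 = (\<Sum>i\<in>I. \<Sum>j\<in>I. v i * v j * (D i \<omega> * D j \<omega>))" for \<omega>
    unfolding power2_eq_square sum_product by (simp add: mult_ac)
  have int: "integrable M (\<lambda>\<omega>. v i * v j * (D i \<omega> * D j \<omega>))" if "i \<in> I" "j \<in> I" for i j
    using integrable_mult_if_square_integrable[OF meas meas sq sq, OF that(1,2,1,2)] by simp
  show "integrable M (\<lambda>\<omega>. (\<Sum>i\<in>I. v i * D i \<omega>)\<^sup>2)"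
    unfolding eq by (intro Bochner_Integration.integrable_sum int)
  show "(\<integral>\<omega>. (\<Sum>i\<in>I. v i * D i \<omega>)\<^sup>2 \<partial>M) = (\<Sum>i\<in>I. \<Sum>j\<in>I. v i * v j * (\<integral>\<omega>. D i \<omega> * D j \<omega> \<partial>M))"
  proof -
    have "(\<integral>\<omega>. (\<Sum>i\<in>I. v i * D i \<omega>)\<^sup>2 \<partial>M) = (\<Sum>i\<in>I. \<integral>\<omega>. (\<Sum>j\<in>I. v i * v j * (D i \<omega> * D j \<omega>)) \<partial>M)"
      unfolding eq by (intro Bochner_Integration.integral_sum Bochner_Integration.integrable_sum int)
    also have "\<dots> = (\<Sum>i\<in>I. \<Sum>j\<in>I. \<integral>\<omega>. v i * v j * (D i \<omega> * D j \<omega>) \<partial>M)"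
      by (intro sum.cong refl Bochner_Integration.integral_sum int)
    finally show ?thesis by simp
  qed
qed

lemma mult_mat_vec_mat_index:
  assumes "l < p" "w \<in> carrier_vec p"
  shows "(mat p p (\<lambda>(l,j). A l j) *\<^sub>v w) $ l = (\<Sum>j<p. A l j * w $ j)"
  using assms by (simp add: scalar_prod_def row_def atLeast0LessThan)

lemma eigenvalue_matI:
  assumes "\<exists>j<n. v j \<noteq> 0" and "\<forall>i<n. (\<Sum>j<n. A i j * v j) = lam * v i"
  shows "eigenvalue (mat n n (\<lambda>(i,j). A i j)) lam"
proof -
  let ?A = "mat n n (\<lambda>(i,j). A i j)"
  have "eigenvector ?A (vec n v) lam"
    unfolding eigenvector_def
  proof (intro conjI)
    show "vec n v \<noteq> 0\<^sub>v (dim_row ?A)"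
      using assms(1) by (metis dim_row_mat(1) index_vec index_zero_vec(1))
    show "?A *\<^sub>v vec n v = lam \<cdot>\<^sub>v vec n v"
    proof (rule eq_vecI)
      fix i assume "i < dim_vec (lam \<cdot>\<^sub>v vec n v)"
      then have i: "i < n" by simp
      have "(?A *\<^sub>v vec n v) $ i = (\<Sum>j<n. A i j * v j)"
        using mult_mat_vec_mat_index[OF i, of "vec n v" A] by simp
      then show "(?A *\<^sub>v vec n v) $ i = (lam \<cdot>\<^sub>v vec n v) $ i" using assms(2) i by simp
    qed simp
  qed simp
  then show ?thesis unfolding eigenvalue_def by blast
qed

lemma integral_square_sum_le_cov_eigenvalue_bound:
  fixes \<delta> :: "nat \<Rightarrow> 'a \<Rightarrow> real"
  assumes meas: "\<And>k. k \<ge> 1 \<Longrightarrow> \<delta> k \<in> borel_measurable M"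
    and centred: "\<And>k. k \<ge> 1 \<Longrightarrow> (\<integral>\<omega>. \<delta> k \<omega> \<partial>M) = 0"
    and sq: "\<And>k. k \<ge> 1 \<Longrightarrow> integrable M (\<lambda>\<omega>. (\<delta> k \<omega>)\<^sup>2)"
    and eig: "\<And>\<nu>. eigenvalue (cov_mat M \<delta> n) \<nu> \<Longrightarrow> \<nu> \<le> C"
  shows "integrable M (\<lambda>\<omega>. (\<Sum>k=1..n. c k * \<delta> k \<omega>)\<^sup>2)"
    and "(\<integral>\<omega>. (\<Sum>k=1..n. c k * \<delta> k \<omega>)\<^sup>2 \<partial>M) \<le> C * (\<Sum>k=1..n. (c k)\<^sup>2)"
proof -
  define q where "q i j = covar M (\<delta> (Suc i)) (\<delta> (Suc j))" for i j
  have shift: "(\<Sum>k=1..n. f k) = (\<Sum>i<n. f (Suc i))" for f :: "nat \<Rightarrow> real"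
    by (rule sum_bounds_lt_plus1[symmetric])
  have moments: "integrable M (\<lambda>\<omega>. (\<Sum>i<n. c (Suc i) * \<delta> (Suc i) \<omega>)\<^sup>2)"
    "(\<integral>\<omega>. (\<Sum>i<n. c (Suc i) * \<delta> (Suc i) \<omega>)\<^sup>2 \<partial>M)
      = (\<Sum>i<n. \<Sum>j<n. c (Suc i) * c (Suc j) * (\<integral>\<omega>. \<delta> (Suc i) \<omega> * \<delta> (Suc j) \<omega> \<partial>M))"
    using integral_square_sum[of "{..<n}" "\<lambda>i. \<delta> (Suc i)" M "\<lambda>i. c (Suc i)"] meas sq by auto
  show "integrable M (\<lambda>\<omega>. (\<Sum>k=1..n. c k * \<delta> k \<omega>)\<^sup>2)" unfolding shift by (rule moments(1))
  have "q i j = (\<integral>\<omega>. \<delta> (Suc i) \<omega> * \<delta> (Suc j) \<omega> \<partial>M)" for i j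
    unfolding q_def covar_def using centred[of "Suc i"] centred[of "Suc j"] by simp
  then have "(\<integral>\<omega>. (\<Sum>k=1..n. c k * \<delta> k \<omega>)\<^sup>2 \<partial>M) = quad_form n q (\<lambda>i. c (Suc i))"
    unfolding shift moments(2) quad_form_def by (simp add: mult_ac)
  also have "\<dots> \<le> C * sqnorm n (\<lambda>i. c (Suc i))"
  proof (rule quad_form_le_eigenvalue_bound)
    show "\<forall>i<n. \<forall>j<n. q i j = q j i" unfolding q_def covar_def by (simp add: mult.commute)
    fix lam v assume "\<exists>j<n. v j \<noteq> 0" "\<forall>i<n. (\<Sum>j<n. q i j * v j) = lam * v i"
    then have "eigenvalue (mat n n (\<lambda>(i,j). q i j)) lam" by (rule eigenvalue_matI)
    then show "lam \<le> C" using eig unfolding cov_mat_def q_def by simp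
  qed
  also have "sqnorm n (\<lambda>i. c (Suc i)) = (\<Sum>k=1..n. (c k)\<^sup>2)"
    unfolding sqnorm_def shift ..
  finally show "(\<integral>\<omega>. (\<Sum>k=1..n. c k * \<delta> k \<omega>)\<^sup>2 \<partial>M) \<le> C * (\<Sum>k=1..n. (c k)\<^sup>2)" .
qed

lemma (in finite_measure) measure_gt_le_integral_div_square:
  fixes f W :: "'a \<Rightarrow> real"
  assumes "integrable M W" "\<forall>\<omega>\<in>space M. 0 \<le> W \<omega>" "\<forall>\<omega>\<in>space M. (f \<omega>)\<^sup>2 \<le> W \<omega>" "\<epsilon> > 0"
  shows "measure M {\<omega>\<in>space M. \<epsilon> < f \<omega>} \<le> (\<integral>\<omega>. W \<omega> \<partial>M) / \<epsilon>\<^sup>2"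
proof -
  have "{\<omega>\<in>space M. \<epsilon> < f \<omega>} \<subseteq> {\<omega>\<in>space M. \<epsilon>\<^sup>2 \<le> W \<omega>}"
  proof safe
    fix \<omega> assume "\<omega> \<in> space M" "\<epsilon> < f \<omega>"
    then have "\<epsilon>\<^sup>2 \<le> (f \<omega>)\<^sup>2" using \<open>\<epsilon> > 0\<close> by (intro power_mono) auto
    then show "\<epsilon>\<^sup>2 \<le> W \<omega>" using assms(3) \<open>\<omega> \<in> space M\<close> by (meson order_trans)
  qed
  then have "measure M {\<omega>\<in>space M. \<epsilon> < f \<omega>} \<le> measure M {\<omega>\<in>space M. \<epsilon>\<^sup>2 \<le> W \<omega>}"
    using borel_measurable_integrable[OF assms(1)] by (intro finite_measure_mono) measurable
  also have "\<dots> \<le> (\<integral>\<omega>. W \<omega> \<partial>M) / \<epsilon>\<^sup>2"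
    using assms by (intro integral_Markov_inequality_measure) auto
  finally show ?thesis .
qed

section \<open>The design and its Gram matrix\<close>

lemma sum_nat_eq: "(\<Sum>i=Suc 0..n. real i) = real n * (real n + 1) / 2"
  by (induction n) (simp_all add: field_simps)

lemma sum_nat_square_eq: "(\<Sum>i=Suc 0..n. (real i)\<^sup>2) = real n * (real n + 1) * (2 * real n + 1) / 6"
  by (induction n) (simp_all add: field_simps power2_eq_square)

locale trig_design =
  fixes m :: nat and mu1 h0 a0 a :: real and x :: "nat \<Rightarrow> real"
  assumes h0_pos: "h0 > 0" and mu1_eq: "mu1 = 2 * pi / h0" and a_pos: "a > 0"
    and not_Ints: "\<forall>j\<in>{1..2*m}. a * real j / h0 \<notin> \<int>"
    and x_eq: "\<forall>i. x i = a0 + a * real i"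
begin

definition npar :: nat where "npar = 2 * m + 2"

lemma npar_ge_2: "2 \<le> npar"
  by (simp add: npar_def)

definition design :: "nat \<Rightarrow> nat \<Rightarrow> real" where
  "design l i = regressor m mu1 (x i) l"

definition theta :: real where "theta = mu1 * a"

definition freq :: "nat \<Rightarrow> nat" where
  "freq l = (if l \<le> m + 1 then l - 1 else l - m - 1)"

definition phase :: "nat \<Rightarrow> real" where
  "phase l = mu1 * real (freq l) * a0 + (if l \<le> m + 1 then 0 else pi / 2)"

lemma design_0: "design 0 i = 1" and design_1: "design (Suc 0) i = x i"
  by (simp_all add: design_def regressor_def)

text \<open>The sines are cosines shifted by a quarter period.\<close>

lemma design_cos:
  assumes "2 \<le> l" "l < npar"
  shows "design l i = cos (theta * real (freq l) * real i + phase l)"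
proof -
  have "mu1 * real (freq l) * x i = theta * real (freq l) * real i + mu1 * real (freq l) * a0"
    using x_eq by (simp add: theta_def algebra_simps)
  moreover have "- sin z = cos (z + pi / 2)" for z by (simp add: cos_add)
  ultimately show ?thesis
    using assms unfolding design_def regressor_def freq_def phase_def npar_def by (auto simp: add.assoc)
qed

lemma freq_bounds: "2 \<le> l \<Longrightarrow> l < npar \<Longrightarrow> 1 \<le> freq l \<and> freq l \<le> m"
  unfolding freq_def npar_def by auto

lemma sin_half_theta_mult_neq_0:
  assumes "k \<noteq> 0" "\<bar>k\<bar> \<le> 2 * int m"
  shows "sin (theta * of_int k / 2) \<noteq> 0"
proof
  assume "sin (theta * of_int k / 2) = 0"
  then obtain i :: int where "theta * of_int k / 2 = of_int i * pi" by (auto simp: sin_zero_iff_int2)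
  moreover have "theta * of_int k / 2 = pi * (a * of_int k / h0)"
    unfolding theta_def unfolding mu1_eq using h0_pos by simp
  ultimately have "pi * (a * of_int k / h0) = pi * of_int i" by simp
  then have i: "a * of_int k / h0 = of_int i" by (simp only: mult_left_cancel[OF pi_neq_zero])
  have "a * real (nat \<bar>k\<bar>) / h0 = \<bar>a * of_int k / h0\<bar>"
    using a_pos h0_pos by (simp add: abs_mult)
  then have "a * real (nat \<bar>k\<bar>) / h0 \<in> \<int>" unfolding i by simp
  moreover have "nat \<bar>k\<bar> \<in> {1..2*m}" using assms by auto
  ultimately show False using not_Ints by blast
qed

lemma sin_half_theta_freq_neq_0:
  assumes "2 \<le> l" "l < npar"
  shows "sin (theta * real (freq l) / 2) \<noteq> 0"
  using sin_half_theta_mult_neq_0[of "int (freq l)"] freq_bounds[OF assms] by simp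

definition gram :: "nat \<Rightarrow> nat \<Rightarrow> nat \<Rightarrow> real" where
  "gram n l l' = (\<Sum>i=1..n. design l i * design l' i)"

text \<open>The column \<open>x\<^sub>i \<approx> a i\<close> has norm of order \<open>a n\<^sup>3\<^sup>/\<^sup>2\<close>, all other columns of order \<open>\<surd>n\<close>.\<close>

definition scale :: "nat \<Rightarrow> nat \<Rightarrow> real" where
  "scale n l = (if l = 1 then a * real n * sqrt (real n) else sqrt (real n))"

definition ngram :: "nat \<Rightarrow> nat \<Rightarrow> nat \<Rightarrow> real" where
  "ngram n l l' = gram n l l' / (scale n l * scale n l')"

definition ngram_lim :: "nat \<Rightarrow> nat \<Rightarrow> real" where
  "ngram_lim l l' = (if l = 0 \<and> l' = 0 then 1 else if l = 1 \<and> l' = 1 then 1/3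
     else if l < 2 \<and> l' < 2 then 1/2 else if l = l' then 1/2 else 0)"

lemma ngram_sym: "ngram n l l' = ngram n l' l"
  by (simp add: ngram_def gram_def mult.commute)

lemma ngram_lim_sym: "ngram_lim l l' = ngram_lim l' l"
  by (auto simp: ngram_lim_def)

lemma scale_pos: "n > 0 \<Longrightarrow> scale n l > 0"
  using a_pos by (simp add: scale_def)

lemma scale_mult_scale:
  "scale n l * scale n l' = real n * (if l = 1 then a * real n else 1) * (if l' = 1 then a * real n else 1)"
proof -
  have "sqrt (real n) * sqrt (real n) = real n" by simp
  then show ?thesis unfolding scale_def by (simp add: algebra_simps)
qed

lemma ngram_00_tendsto: "(\<lambda>n. ngram n 0 0) \<longlonglongrightarrow> 1"
proof -
  have "\<forall>\<^sub>F n in sequentially. 1 = ngram n 0 0"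
    using eventually_gt_at_top[of 0] by eventually_elim (simp add: ngram_def scale_mult_scale gram_def design_0)
  then show ?thesis by (rule Lim_transform_eventually[OF tendsto_const])
qed

lemma ngram_01_tendsto: "(\<lambda>n. ngram n 0 1) \<longlonglongrightarrow> 1/2"
proof -
  have "gram n 0 1 = real n * a0 + a * (real n * (real n + 1) / 2)" for n
    using x_eq by (simp add: gram_def design_0 design_1 sum.distrib sum_distrib_left[symmetric] sum_nat_eq)
  then have "ngram n 0 1 = (real n * a0 + a * (real n * (real n + 1) / 2)) / (a * real n * real n)" for n
    unfolding ngram_def scale_mult_scale by (simp add: mult_ac)
  moreover have "(\<lambda>n. (real n * a0 + a * (real n * (real n + 1) / 2)) / (a * real n * real n)) \<longlonglongrightarrow> 1/2"
    using a_pos by real_asymp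
  ultimately show ?thesis by simp
qed

lemma ngram_11_tendsto: "(\<lambda>n. ngram n 1 1) \<longlonglongrightarrow> 1/3"
proof -
  have "x i * x i = a0 * a0 + 2 * a0 * a * real i + a * a * (real i)\<^sup>2" for i
    using x_eq by (simp add: algebra_simps power2_eq_square)
  then have gram_11: "gram n 1 1 = real n * a0 * a0 + 2 * a0 * a * (real n * (real n + 1) / 2)
      + a * a * (real n * (real n + 1) * (2 * real n + 1) / 6)" for n
    by (simp add: gram_def design_1 sum.distrib sum_distrib_left[symmetric] sum_nat_eq sum_nat_square_eq)
  have "ngram n 1 1 = (a0 / a)\<^sup>2 / (real n * real n) + (a0 / a) * (real n + 1) / (real n * real n)
      + (real n + 1) * (2 * real n + 1) / (6 * real n * real n)" for n
    unfolding ngram_def scale_mult_scale gram_11 using a_pos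
    by (cases "n = 0") (simp_all add: field_simps power2_eq_square)
  moreover have "(\<lambda>n. (a0 / a)\<^sup>2 / (real n * real n) + (a0 / a) * (real n + 1) / (real n * real n)
      + (real n + 1) * (2 * real n + 1) / (6 * real n * real n)) \<longlonglongrightarrow> 1/3"
    by real_asymp
  ultimately show ?thesis by simp
qed

lemma ngram_0_cos_tendsto:
  assumes "2 \<le> l" "l < npar"
  shows "(\<lambda>n. ngram n 0 l) \<longlonglongrightarrow> 0"
proof -
  have "ngram n 0 l = (\<Sum>i=1..n. cos (theta * real (freq l) * real i + phase l)) / real n" for n
    using assms unfolding ngram_def gram_def scale_mult_scale by (simp add: design_0 design_cos)
  then show ?thesis
    using mean_cos_tendsto_0[OF sin_half_theta_freq_neq_0[OF assms]] by (simp add: mult.assoc)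
qed

lemma ngram_1_cos_tendsto:
  assumes "2 \<le> l" "l < npar"
  shows "(\<lambda>n. ngram n 1 l) \<longlonglongrightarrow> 0"
proof -
  let ?t = "theta * real (freq l)"
  let ?c = "\<lambda>i. cos (?t * real i + phase l)"
  have "(\<Sum>i=1..n. x i * ?c i) = a0 * (\<Sum>i=1..n. ?c i) + a * (\<Sum>i=1..n. real i * ?c i)" for n
    using x_eq by (simp add: algebra_simps sum_distrib_left sum.distrib)
  then have "ngram n 1 l = (a0 / a) * ((\<Sum>i=1..n. ?c i) / real n) * (1 / real n)
      + (\<Sum>i=1..n. real i * ?c i) / (real n * real n)" for n
    using assms a_pos unfolding ngram_def gram_def scale_mult_scale
    by (cases "n = 0") (simp_all add: design_1 design_cos field_simps)
  moreover have "(\<lambda>n. (a0 / a) * ((\<Sum>i=1..n. ?c i) / real n) * (1 / real n)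
      + (\<Sum>i=1..n. real i * ?c i) / (real n * real n)) \<longlonglongrightarrow> (a0 / a) * 0 * 0 + 0"
    using sin_half_theta_freq_neq_0[OF assms]
    by (intro tendsto_intros mean_cos_tendsto_0 weighted_mean_cos_tendsto_0 lim_1_over_n)
  ultimately show ?thesis by simp
qed

lemma cos_phase_diff_eq_0:
  assumes "2 \<le> l" "l < npar" "2 \<le> l'" "l' < npar" "l \<noteq> l'" "freq l = freq l'"
  shows "cos (phase l - phase l') = 0"
proof -
  have "phase l - phase l' = pi/2 \<or> phase l - phase l' = - (pi/2)"
    using assms unfolding phase_def freq_def npar_def by (auto split: if_splits)
  then show ?thesis by (metis cos_pi_half cos_minus)
qed

text \<open>Product-to-sum turns the product of two trigonometric columns into cosines with frequencies
  \<open>\<theta>(k \<plusminus> k')\<close>, where \<open>0 < |k \<plusminus> k'| \<le> 2m\<close> unless \<open>k = k'\<close>; this is where the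
  hypothesis on \<open>a j / h\<^sub>0\<close> for \<open>j \<le> 2m\<close> enters.\<close>

lemma ngram_cos_cos_tendsto:
  assumes l: "2 \<le> l" "l < npar" and l': "2 \<le> l'" "l' < npar"
  shows "(\<lambda>n. ngram n l l') \<longlonglongrightarrow> ngram_lim l l'"
proof -
  define k1 where "k1 = int (freq l) - int (freq l')"
  define k2 where "k2 = int (freq l) + int (freq l')"
  have k2: "k2 \<noteq> 0" "\<bar>k2\<bar> \<le> 2 * int m" and k1: "\<bar>k1\<bar> \<le> 2 * int m"
    using freq_bounds[OF l] freq_bounds[OF l'] unfolding k1_def k2_def by auto
  have "design l i * design l' i = (1/2) * cos (theta * of_int k1 * real i + (phase l - phase l'))
      + (1/2) * cos (theta * of_int k2 * real i + (phase l + phase l'))" for i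
    unfolding design_cos[OF l] design_cos[OF l'] cos_times_cos k1_def k2_def
    by (simp add: algebra_simps add_divide_distrib)
  then have ngram_eq: "ngram n l l'
      = (1/2) * ((\<Sum>i=1..n. cos (theta * of_int k1 * real i + (phase l - phase l'))) / real n)
      + (1/2) * ((\<Sum>i=1..n. cos (theta * of_int k2 * real i + (phase l + phase l'))) / real n)" for n
    using l l' unfolding ngram_def gram_def scale_mult_scale
    by (simp add: sum.distrib sum_distrib_left[symmetric] add_divide_distrib sum_divide_distrib[symmetric])
  have lim2: "(\<lambda>n. (\<Sum>i=1..n. cos (theta * of_int k2 * real i + (phase l + phase l'))) / real n) \<longlonglongrightarrow> 0"
    by (rule mean_cos_tendsto_0[OF sin_half_theta_mult_neq_0[OF k2]])
  show ?thesis
  proof (cases "freq l = freq l'")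
    case True
    then have "(\<lambda>n. (\<Sum>i=1..n. cos (theta * of_int k1 * real i + (phase l - phase l'))) / real n)
        \<longlonglongrightarrow> cos (phase l - phase l')"
      using mean_const_tendsto unfolding k1_def by simp
    moreover have "ngram_lim l l' = (1/2) * cos (phase l - phase l') + (1/2) * 0"
      using l l' cos_phase_diff_eq_0[OF l l' _ True] by (cases "l = l'") (simp_all add: ngram_lim_def)
    ultimately show ?thesis unfolding ngram_eq by (simp only:) (intro tendsto_intros lim2)
  next
    case False
    then have "(\<lambda>n. (\<Sum>i=1..n. cos (theta * of_int k1 * real i + (phase l - phase l'))) / real n) \<longlonglongrightarrow> 0"
      using mean_cos_tendsto_0[OF sin_half_theta_mult_neq_0[OF _ k1]] unfolding k1_def by simp
    moreover have "ngram_lim l l' = (1/2) * 0 + (1/2) * 0" using False l l' by (auto simp: ngram_lim_def)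
    ultimately show ?thesis unfolding ngram_eq by (simp only:) (intro tendsto_intros lim2)
  qed
qed

lemma ngram_tendsto:
  assumes "l < npar" "l' < npar"
  shows "(\<lambda>n. ngram n l l') \<longlonglongrightarrow> ngram_lim l l'"
proof -
  have ordered: "(\<lambda>n. ngram n l l') \<longlonglongrightarrow> ngram_lim l l'" if "l \<le> l'" "l' < npar" for l l'
  proof -
    have "l = 0 \<and> l' = 0 \<or> l = 0 \<and> l' = 1 \<or> l = 1 \<and> l' = 1 \<or> l \<le> 1 \<and> 2 \<le> l' \<or> 2 \<le> l"
      using that by arith
    then consider "l = 0" "l' = 0" | "l = 0" "l' = 1" | "l = 1" "l' = 1" | "l \<le> 1" "2 \<le> l'" | "2 \<le> l"
      by blast
    then show ?thesis
    proof cases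
      case 4
      then show ?thesis using that ngram_0_cos_tendsto ngram_1_cos_tendsto
        by (cases "l = 0") (simp_all add: ngram_lim_def le_Suc_eq)
    qed (use that ngram_00_tendsto ngram_01_tendsto ngram_11_tendsto ngram_cos_cos_tendsto
          in \<open>simp_all add: ngram_lim_def\<close>)
  qed
  show ?thesis
    using ordered[of l l'] ordered[of l' l] assms by (cases "l \<le> l'") (simp_all add: ngram_sym ngram_lim_sym)
qed

end

section \<open>Conditioning of the scaled design\<close>

lemma sum_lessThan_split_01:
  "2 \<le> (p::nat) \<Longrightarrow> (\<Sum>l<p. g l) = g 0 + g 1 + (\<Sum>l\<in>{2..<p}. g l)"
proof -
  assume "2 \<le> p"
  then have "{..<p} = insert 0 (insert 1 {2..<p})" by auto
  then show ?thesis by (simp add: add.assoc)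
qed

text \<open>The Gram limit of the columns \<open>1\<close> and \<open>i/n\<close> is the \<open>2\<times>2\<close> Hilbert matrix, whose
  smallest eigenvalue exceeds \<open>1/20\<close>.\<close>

lemma hilbert_2_form_ge: "(u::real) * u + u * v + v * v / 3 \<ge> (u * u + v * v) / 20"
proof -
  have "u * u + u * v + v * v / 3 - (u * u + v * v) / 20
      = (19 * u + 10 * v) * (19 * u + 10 * v) / 380 + 23 / 1140 * (v * v)"
    by (simp add: field_simps)
  moreover have "0 \<le> (19 * u + 10 * v) * (19 * u + 10 * v)" "0 \<le> v * v" by simp_all
  ultimately show ?thesis by linarith
qed

lemma abs_double_sum_le:
  fixes v :: "nat \<Rightarrow> real"
  shows "\<bar>\<Sum>l<p. \<Sum>l'<p. v l * v l' * D l l'\<bar> \<le> (\<Sum>l<p. (v l)\<^sup>2) * (\<Sum>l<p. \<Sum>l'<p. \<bar>D l l'\<bar>)"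
proof -
  let ?S = "\<Sum>l<p. (v l)\<^sup>2"
  have sq: "(v l)\<^sup>2 \<le> ?S" if "l < p" for l
    by (rule member_le_sum) (use that in auto)
  have "\<bar>v l * v l'\<bar> \<le> ?S" if "l < p" "l' < p" for l l'
    using sum_squares_bound[of "\<bar>v l\<bar>" "\<bar>v l'\<bar>"] sq[OF that(1)] sq[OF that(2)] by (simp add: abs_mult)
  then have "\<bar>v l * v l' * D l l'\<bar> \<le> ?S * \<bar>D l l'\<bar>" if "l < p" "l' < p" for l l'
    using that by (simp add: abs_mult mult_right_mono)
  then have "\<bar>\<Sum>l<p. \<Sum>l'<p. v l * v l' * D l l'\<bar> \<le> (\<Sum>l<p. \<Sum>l'<p. ?S * \<bar>D l l'\<bar>)"
    by (intro order_trans[OF sum_abs] sum_mono order_trans[OF sum_abs]) auto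
  then show ?thesis by (simp add: sum_distrib_left)
qed

context trig_design
begin

lemma ngram_lim_form_ge:
  "(\<Sum>l<npar. \<Sum>l'<npar. v l * v l' * ngram_lim l l') \<ge> (1/20) * (\<Sum>l<npar. (v l)\<^sup>2)"
proof -
  have diag: "(\<Sum>l'<npar. v l * v l' * ngram_lim l l') = (v l)\<^sup>2 / 2" if "l \<in> {2..<npar}" for l
  proof -
    have "(\<Sum>l'<npar. v l * v l' * ngram_lim l l') = (\<Sum>l'<npar. if l' = l then (v l)\<^sup>2 / 2 else 0)"
      using that by (intro sum.cong) (auto simp: ngram_lim_def power2_eq_square)
    then show ?thesis using that by simp
  qed
  define A where "A = (\<Sum>l\<in>{2..<npar}. (v l)\<^sup>2)"
  have row0: "(\<Sum>l'<npar. v 0 * v l' * ngram_lim 0 l') = v 0 * v 0 + v 0 * v 1 / 2"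
    unfolding sum_lessThan_split_01[OF npar_ge_2] by (simp add: ngram_lim_def)
  have row1: "(\<Sum>l'<npar. v 1 * v l' * ngram_lim 1 l') = v 1 * v 0 / 2 + v 1 * v 1 / 3"
    unfolding sum_lessThan_split_01[OF npar_ge_2] by (simp add: ngram_lim_def)
  have "(\<Sum>l\<in>{2..<npar}. \<Sum>l'<npar. v l * v l' * ngram_lim l l') = A / 2"
    unfolding A_def sum_divide_distrib by (rule sum.cong[OF refl diag])
  then have form: "(\<Sum>l<npar. \<Sum>l'<npar. v l * v l' * ngram_lim l l') = v 0 * v 0 + v 0 * v 1 + v 1 * v 1 / 3 + A / 2"
    unfolding sum_lessThan_split_01[OF npar_ge_2, of "\<lambda>l. \<Sum>l'<npar. v l * v l' * ngram_lim l l'"] row0 row1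
    by (simp add: algebra_simps)
  moreover have norm: "(\<Sum>l<npar. (v l)\<^sup>2) = v 0 * v 0 + v 1 * v 1 + A"
    unfolding sum_lessThan_split_01[OF npar_ge_2] A_def by (simp add: power2_eq_square)
  moreover have "0 \<le> A" unfolding A_def by (intro sum_nonneg) simp
  moreover have "1/20 * (v 0 * v 0 + v 1 * v 1 + A) = (v 0 * v 0 + v 1 * v 1) / 20 + A / 20" by simp
  ultimately show ?thesis unfolding form norm using hilbert_2_form_ge[of "v 0" "v 1"] by linarith
qed

definition fit :: "(nat \<Rightarrow> real) \<Rightarrow> nat \<Rightarrow> real" where
  "fit b i = (\<Sum>j<npar. b j * design j i)"

lemma sum_fit_square_eq:
  "(\<Sum>i=1..n. (fit e i)\<^sup>2) = (\<Sum>l<npar. \<Sum>l'<npar. e l * e l' * gram n l l')"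
proof -
  have "(\<Sum>i=1..n. (fit e i)\<^sup>2) = (\<Sum>i=1..n. \<Sum>l<npar. \<Sum>l'<npar. e l * e l' * (design l i * design l' i))"
    unfolding fit_def power2_eq_square sum_product by (simp only: mult_ac)
  also have "\<dots> = (\<Sum>l<npar. \<Sum>l'<npar. \<Sum>i=1..n. e l * e l' * (design l i * design l' i))"
    by (subst sum.swap) (simp only: sum.swap[of _ "{1..n}"])
  finally show ?thesis unfolding gram_def sum_distrib_left .
qed

lemma sum_fit_square_ge_eventually:
  "\<exists>N>0. \<forall>n\<ge>N. \<forall>e. (\<Sum>i=1..n. (fit e i)\<^sup>2) \<ge> (1/40) * (\<Sum>l<npar. (e l * scale n l)\<^sup>2)"
proof -
  define D where "D n = (\<Sum>l<npar. \<Sum>l'<npar. \<bar>ngram n l l' - ngram_lim l l'\<bar>)" for n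
  have "D \<longlonglongrightarrow> (\<Sum>l<npar. \<Sum>l'<npar. \<bar>ngram_lim l l' - ngram_lim l l'\<bar>)"
    unfolding D_def by (intro tendsto_intros ngram_tendsto) auto
  then have "\<forall>\<^sub>F n in sequentially. D n < 1/40" by (rule order_tendstoD(2)) simp_all
  then have "\<forall>\<^sub>F n in sequentially. D n < 1/40 \<and> n > 0" by (intro eventually_conj eventually_gt_at_top)
  then obtain N where N: "\<And>n. n \<ge> N \<Longrightarrow> D n < 1/40 \<and> n > 0" by (auto simp: eventually_sequentially)
  have "(\<Sum>i=1..n. (fit e i)\<^sup>2) \<ge> (1/40) * (\<Sum>l<npar. (e l * scale n l)\<^sup>2)" if "n \<ge> N" for n e
  proof -
    define v where "v l = e l * scale n l" for l
    define S where "S = (\<Sum>l<npar. (v l)\<^sup>2)"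
    have "n > 0" and "D n < 1/40" using N[OF that] by auto
    then have scale_nz: "scale n l \<noteq> 0" for l using scale_pos[of n l] by simp
    have "(\<Sum>i=1..n. (fit e i)\<^sup>2) = (\<Sum>l<npar. \<Sum>l'<npar. v l * v l' * ngram n l l')"
      unfolding sum_fit_square_eq v_def ngram_def by (intro sum.cong refl) (simp add: field_simps scale_nz)
    also have "\<dots> = (\<Sum>l<npar. \<Sum>l'<npar. v l * v l' * ngram_lim l l')
        + (\<Sum>l<npar. \<Sum>l'<npar. v l * v l' * (ngram n l l' - ngram_lim l l'))"
      by (simp add: sum.distrib[symmetric] algebra_simps)
    finally have split: "(\<Sum>i=1..n. (fit e i)\<^sup>2) = \<dots>" .
    have "\<bar>\<Sum>l<npar. \<Sum>l'<npar. v l * v l' * (ngram n l l' - ngram_lim l l')\<bar> \<le> S * D n"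
      unfolding S_def D_def by (rule abs_double_sum_le)
    also have "\<dots> \<le> S * (1/40)"
      using \<open>D n < 1/40\<close> by (intro mult_left_mono) (auto simp: S_def intro: sum_nonneg)
    finally show ?thesis
      using split ngram_lim_form_ge[of v] unfolding S_def v_def by linarith
  qed
  moreover have "N > 0" using N[of N] by simp
  ultimately show ?thesis by blast
qed

end

section \<open>Injectivity of the design\<close>

text \<open>\<open>annihilator_step t\<close> kills \<open>i \<mapsto> cos (t i + \<phi>)\<close>, and for \<open>t = 0\<close> also every affine
  sequence; a sequence killed by a product of such steps satisfies a linear recurrence, so it vanishes
  as soon as it vanishes at the first \<open>2 \<times>\<close> (number of steps) indices.\<close>

definition annihilator_step :: "real \<Rightarrow> (nat \<Rightarrow> real) \<Rightarrow> nat \<Rightarrow> real" where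
  "annihilator_step t u i = u (i + 2) - 2 * cos t * u (i + 1) + u i"

fun annihilator :: "real list \<Rightarrow> (nat \<Rightarrow> real) \<Rightarrow> nat \<Rightarrow> real" where
  "annihilator [] u = u"
| "annihilator (t # ts) u = annihilator ts (annihilator_step t u)"

lemma eq_0_if_annihilator_eq_0:
  "(\<forall>i\<ge>1. annihilator ts u i = 0) \<Longrightarrow> (\<forall>i. 1 \<le> i \<and> i \<le> 2 * length ts \<longrightarrow> u i = 0) \<Longrightarrow> \<forall>i\<ge>1. u i = 0"
proof (induction ts arbitrary: u)
  case (Cons t ts)
  define v where "v = annihilator_step t u"
  have "\<forall>i\<ge>1. annihilator ts v i = 0" using Cons.prems(1) by (simp add: v_def)
  moreover have "\<forall>i. 1 \<le> i \<and> i \<le> 2 * length ts \<longrightarrow> v i = 0"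
    using Cons.prems(2) by (simp add: v_def annihilator_step_def)
  ultimately have v0: "\<forall>i\<ge>1. v i = 0" by (rule Cons.IH)
  have u12: "u 1 = 0" "u 2 = 0" using Cons.prems(2) by auto
  have "u i = 0" if "i \<ge> 1" for i
    using that
  proof (induction i rule: less_induct)
    case (less i)
    show ?case
    proof (cases "i \<le> 2")
      case True
      then have "i = 1 \<or> i = 2" using less.prems by arith
      then show ?thesis using u12 by auto
    next
      case False
      define j where "j = i - 2"
      have j: "i = j + 2" "j \<ge> 1" using False unfolding j_def by arith+
      have "u j = 0" "u (j + 1) = 0" using less.IH j by auto
      moreover have "v j = 0" using v0 j by auto
      ultimately show ?thesis unfolding v_def annihilator_step_def j(1) by simp
    qed
  qed
  then show ?case by blast
qed simp

lemma annihilator_0: "annihilator ts (\<lambda>i. 0) = (\<lambda>i. 0)"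
proof -
  have "annihilator_step t (\<lambda>i. 0) = (\<lambda>i. 0)" for t by (simp add: annihilator_step_def fun_eq_iff)
  then show ?thesis by (induction ts) simp_all
qed

lemma annihilator_add:
  "annihilator ts (\<lambda>i. u i + w i) = (\<lambda>i. annihilator ts u i + annihilator ts w i)"
proof (induction ts arbitrary: u w)
  case (Cons t ts)
  have "annihilator_step t (\<lambda>i. u i + w i) = (\<lambda>i. annihilator_step t u i + annihilator_step t w i)"
    by (simp add: annihilator_step_def fun_eq_iff algebra_simps)
  then show ?case using Cons.IH by simp
qed simp

lemma annihilator_sum:
  "finite L \<Longrightarrow> annihilator ts (\<lambda>i. \<Sum>l\<in>L. g l i) = (\<lambda>i. \<Sum>l\<in>L. annihilator ts (g l) i)"
  by (induction L rule: finite_induct) (simp_all add: annihilator_0 annihilator_add)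

lemma annihilator_step_cos:
  "annihilator_step t (\<lambda>i. c * cos (s * real i + f)) = (\<lambda>i. (2 * (cos s - cos t) * c) * cos (s * real i + (s + f)))"
proof
  fix i
  have "cos (s * real (i + 2) + f) + cos (s * real i + f)
      = 2 * cos (((s * real (i + 2) + f) + (s * real i + f)) / 2) * cos (((s * real (i + 2) + f) - (s * real i + f)) / 2)"
    by (rule cos_plus_cos)
  also have "((s * real (i + 2) + f) + (s * real i + f)) / 2 = s * real i + (s + f)" by (simp add: algebra_simps)
  also have "((s * real (i + 2) + f) - (s * real i + f)) / 2 = s" by (simp add: algebra_simps)
  finally have "cos (s * real (i + 2) + f) + cos (s * real i + f) = 2 * cos (s * real i + (s + f)) * cos s" .
  moreover have "s * real (i + 1) + f = s * real i + (s + f)" by (simp add: algebra_simps)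
  ultimately show "annihilator_step t (\<lambda>i. c * cos (s * real i + f)) i = (2 * (cos s - cos t) * c) * cos (s * real i + (s + f))"
    unfolding annihilator_step_def by (simp add: algebra_simps, metis distrib_left)
qed

lemma annihilator_cos: "s \<in> set ts \<Longrightarrow> annihilator ts (\<lambda>i. c * cos (s * real i + f)) = (\<lambda>i. 0)"
  by (induction ts arbitrary: c f) (auto simp: annihilator_step_cos annihilator_0)

lemma annihilator_step_affine: "annihilator_step 0 (\<lambda>i. c0 + c1 * real i) = (\<lambda>i. 0)"
  by (rule ext) (simp add: annihilator_step_def algebra_simps)

context trig_design
begin

definition design_freqs :: "real list" where
  "design_freqs = 0 # map (\<lambda>k. theta * real k) [1..<m+1]"

lemma annihilator_fit: "annihilator design_freqs (fit e) = (\<lambda>i. 0)"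
proof -
  let ?trig = "\<lambda>l i. e l * cos (theta * real (freq l) * real i + phase l)"
  have "fit e = (\<lambda>i. ((e 0 + e 1 * a0) + (e 1 * a) * real i) + (\<Sum>l\<in>{2..<npar}. ?trig l i))"
  proof
    fix i
    have "(\<Sum>l\<in>{2..<npar}. e l * design l i) = (\<Sum>l\<in>{2..<npar}. ?trig l i)"
      by (rule sum.cong) (auto simp: design_cos)
    then show "fit e i = ((e 0 + e 1 * a0) + (e 1 * a) * real i) + (\<Sum>l\<in>{2..<npar}. ?trig l i)"
      unfolding fit_def sum_lessThan_split_01[OF npar_ge_2] using x_eq by (simp add: design_0 design_1 algebra_simps)
  qed
  moreover have "annihilator design_freqs (\<lambda>i. (e 0 + e 1 * a0) + (e 1 * a) * real i) = (\<lambda>i. 0)"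
    unfolding design_freqs_def annihilator.simps annihilator_step_affine annihilator_0 ..
  moreover have "annihilator design_freqs (\<lambda>i. \<Sum>l\<in>{2..<npar}. ?trig l i) = (\<lambda>i. 0)"
  proof -
    have "annihilator design_freqs (?trig l) = (\<lambda>i. 0)" if "l \<in> {2..<npar}" for l
      using freq_bounds[of l] that by (intro annihilator_cos) (auto simp: design_freqs_def)
    then show ?thesis by (simp add: annihilator_sum)
  qed
  ultimately show ?thesis by (simp only: annihilator_add) simp
qed

text \<open>A combination of the columns that vanishes at the first \<open>npar\<close> grid points vanishes on the
  whole grid, so the conditioning bound at one large sample size forces it to be trivial.\<close>

lemma design_injective:
  assumes "n \<ge> npar" and "\<forall>i\<in>{1..n}. fit e i = 0"
  shows "\<forall>l<npar. e l = 0"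
proof -
  have "\<forall>i\<ge>1. fit e i = 0"
    by (rule eq_0_if_annihilator_eq_0[of design_freqs])
      (use annihilator_fit assms in \<open>auto simp: design_freqs_def npar_def\<close>)
  moreover obtain N where "N > 0" and N: "\<And>e. (\<Sum>i=1..N. (fit e i)\<^sup>2) \<ge> (1/40) * (\<Sum>l<npar. (e l * scale N l)\<^sup>2)"
    using sum_fit_square_ge_eventually by blast
  ultimately have "(\<Sum>l<npar. (e l * scale N l)\<^sup>2) \<le> 0" using N[of e] by simp
  then have "(\<Sum>l<npar. (e l * scale N l)\<^sup>2) = 0" by (simp add: antisym sum_nonneg)
  then have "\<forall>l<npar. e l * scale N l = 0" by (simp add: sum_nonneg_eq_0_iff)
  then show ?thesis using scale_pos[OF \<open>N > 0\<close>] by (metis mult_eq_0_iff less_irrefl)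
qed

end

section \<open>Least squares\<close>

lemma linear_system_solvable:
  fixes A :: "nat \<Rightarrow> nat \<Rightarrow> real"
  assumes inj: "\<And>v. \<forall>l<p. (\<Sum>j<p. A l j * v j) = 0 \<Longrightarrow> \<forall>j<p. v j = 0"
  shows "\<exists>v. \<forall>l<p. (\<Sum>j<p. A l j * v j) = r l"
proof -
  define B where "B = mat p p (\<lambda>(l,j). A l j)"
  have B: "B \<in> carrier_mat p p" unfolding B_def by simp
  have "det B \<noteq> 0"
  proof
    assume "det B = 0"
    then obtain w where w: "w \<in> carrier_vec p" "w \<noteq> 0\<^sub>v p" "B *\<^sub>v w = 0\<^sub>v p"
      using det_0_iff_vec_prod_zero_field[OF B] by blast
    have "\<forall>l<p. (\<Sum>j<p. A l j * w $ j) = 0"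
    proof (intro allI impI)
      fix l assume l: "l < p"
      have "(B *\<^sub>v w) $ l = 0" using w(3) l by simp
      then show "(\<Sum>j<p. A l j * w $ j) = 0" unfolding B_def using mult_mat_vec_mat_index[OF l w(1)] by simp
    qed
    then have "\<forall>j<p. w $ j = 0" by (rule inj)
    then have "w = 0\<^sub>v p" using w(1) by (intro eq_vecI) auto
    with w(2) show False by simp
  qed
  then have "B \<in> Units (ring_mat TYPE(real) p ())" by (rule det_non_zero_imp_unit[OF B])
  then obtain C where C: "C \<in> carrier_mat p p" "B * C = 1\<^sub>m p" by (auto simp: Units_def ring_mat_def)
  define w where "w = C *\<^sub>v vec p r"
  have w: "w \<in> carrier_vec p" unfolding w_def using C by simp
  have Bw: "B *\<^sub>v w = vec p r" unfolding w_def
    using assoc_mult_mat_vec[OF B C(1), of "vec p r"] C(2) by simp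
  have "(\<Sum>j<p. A l j * w $ j) = r l" if l: "l < p" for l
  proof -
    have "(B *\<^sub>v w) $ l = r l" unfolding Bw using l by simp
    then show ?thesis using mult_mat_vec_mat_index[OF l w] unfolding B_def by simp
  qed
  then show ?thesis by blast
qed

context trig_design
begin

definition normal_eqs :: "nat \<Rightarrow> (nat \<Rightarrow> real) \<Rightarrow> (nat \<Rightarrow> real) \<Rightarrow> bool" where
  "normal_eqs n y b \<longleftrightarrow> (\<forall>l<npar. (\<Sum>i=1..n. design l i * (y i - fit b i)) = 0)"

lemma RSS_eq: "RSS m mu1 x y n b = (\<Sum>i=1..n. (y i - fit b i)\<^sup>2)"
  unfolding RSS_def fit_def design_def npar_def by (simp add: mult.commute)

lemma fit_diff: "fit c i - fit b i = fit (\<lambda>j. c j - b j) i"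
  unfolding fit_def by (simp add: sum_subtractf[symmetric] algebra_simps)

lemma sum_fit_mult_eq: "(\<Sum>i=1..n. fit b i * w i) = (\<Sum>l<npar. b l * (\<Sum>i=1..n. design l i * w i))"
  unfolding fit_def sum_distrib_right sum_distrib_left by (subst sum.swap) (simp add: mult_ac)

text \<open>At a solution of the normal equations the residual is orthogonal to every fit.\<close>

lemma RSS_eq_RSS_plus:
  assumes "normal_eqs n y b"
  shows "RSS m mu1 x y n c = RSS m mu1 x y n b + (\<Sum>i=1..n. (fit (\<lambda>j. c j - b j) i)\<^sup>2)"
proof -
  let ?d = "\<lambda>j. c j - b j"
  have cross: "(\<Sum>i=1..n. fit ?d i * (y i - fit b i)) = 0"
    using assms unfolding sum_fit_mult_eq normal_eqs_def by simp
  have "RSS m mu1 x y n c = (\<Sum>i=1..n. ((y i - fit b i) - fit ?d i)\<^sup>2)"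
    unfolding RSS_eq using fit_diff[of c _ b] by (simp add: algebra_simps)
  also have "\<dots> = (\<Sum>i=1..n. (y i - fit b i)\<^sup>2 - 2 * (fit ?d i * (y i - fit b i)) + (fit ?d i)\<^sup>2)"
    by (intro sum.cong refl) (simp add: power2_diff mult_ac)
  also have "\<dots> = RSS m mu1 x y n b - 2 * (\<Sum>i=1..n. fit ?d i * (y i - fit b i)) + (\<Sum>i=1..n. (fit ?d i)\<^sup>2)"
    unfolding RSS_eq by (simp add: sum.distrib sum_subtractf sum_distrib_left)
  finally show ?thesis unfolding cross by simp
qed

lemma fit_eq_0_if_sum_square_eq_0:
  assumes "n \<ge> npar" "(\<Sum>i=1..n. (fit d i)\<^sup>2) = 0"
  shows "\<forall>j<npar. d j = 0"
  using assms design_injective[OF assms(1)] by (simp add: sum_nonneg_eq_0_iff)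

lemma normal_eqs_solvable:
  assumes n: "n \<ge> npar"
  shows "\<exists>b. (\<forall>j\<ge>npar. b j = 0) \<and> normal_eqs n y b"
proof -
  define A where "A l j = (\<Sum>i=1..n. design l i * design j i)" for l j
  have "\<exists>v. \<forall>l<npar. (\<Sum>j<npar. A l j * v j) = (\<Sum>i=1..n. design l i * y i)"
  proof (rule linear_system_solvable)
    fix v assume "\<forall>l<npar. (\<Sum>j<npar. A l j * v j) = 0"
    moreover have "(\<Sum>i=1..n. (fit v i)\<^sup>2) = (\<Sum>l<npar. v l * (\<Sum>j<npar. A l j * v j))"
      unfolding sum_fit_square_eq A_def gram_def by (simp add: sum_distrib_left mult_ac)
    ultimately show "\<forall>j<npar. v j = 0" using fit_eq_0_if_sum_square_eq_0[OF n] by simp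
  qed
  then obtain v where v: "\<forall>l<npar. (\<Sum>j<npar. A l j * v j) = (\<Sum>i=1..n. design l i * y i)" by blast
  define b where "b j = (if j < npar then v j else 0)" for j
  have "(\<Sum>i=1..n. design l i * fit b i) = (\<Sum>j<npar. A l j * v j)" for l
    unfolding fit_def A_def b_def sum_distrib_left sum_distrib_right
    by (subst sum.swap) (intro sum.cong refl, simp add: mult_ac)
  then have "normal_eqs n y b"
    using v unfolding normal_eqs_def by (simp add: right_diff_distrib sum_subtractf)
  moreover have "\<forall>j\<ge>npar. b j = 0" unfolding b_def by simp
  ultimately show ?thesis by blast
qed

lemma OLS_eqI:
  assumes n: "n \<ge> npar" and b: "\<forall>j\<ge>npar. b j = 0" "normal_eqs n y b"
  shows "OLS m mu1 x y n = b"
  unfolding OLS_def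
proof (rule the_equality)
  have "RSS m mu1 x y n b \<le> RSS m mu1 x y n c" for c
    using RSS_eq_RSS_plus[OF b(2), of c] sum_nonneg[of "{1..n}" "\<lambda>i. (fit (\<lambda>j. c j - b j) i)\<^sup>2"] by simp
  then show "(\<forall>j\<ge>2*m+2. b j = 0) \<and> (\<forall>c. (\<forall>j\<ge>2*m+2. c j = 0) \<longrightarrow> RSS m mu1 x y n b \<le> RSS m mu1 x y n c)"
    using b(1) unfolding npar_def by blast
next
  fix c assume c: "(\<forall>j\<ge>2*m+2. c j = 0) \<and> (\<forall>c'. (\<forall>j\<ge>2*m+2. c' j = 0) \<longrightarrow> RSS m mu1 x y n c \<le> RSS m mu1 x y n c')"
  then have "RSS m mu1 x y n c \<le> RSS m mu1 x y n b" using b(1) unfolding npar_def by blast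
  then have "(\<Sum>i=1..n. (fit (\<lambda>j. c j - b j) i)\<^sup>2) = 0"
    using RSS_eq_RSS_plus[OF b(2), of c] sum_nonneg[of "{1..n}" "\<lambda>i. (fit (\<lambda>j. c j - b j) i)\<^sup>2"] by simp
  then have "\<forall>j<npar. c j = b j" using fit_eq_0_if_sum_square_eq_0[OF n] by fastforce
  with c b(1) show "c = b" unfolding npar_def by (metis not_le ext)
qed

lemma OLS_normal_eqs:
  assumes "n \<ge> npar"
  shows "(\<forall>j\<ge>npar. OLS m mu1 x y n j = 0) \<and> normal_eqs n y (OLS m mu1 x y n)"
  using normal_eqs_solvable[OF assms] OLS_eqI[OF assms] by metis

lemma OLS_linear:
  assumes n: "n \<ge> npar"
  shows "OLS m mu1 x y n = (\<lambda>j. \<Sum>i=1..n. y i * OLS m mu1 x (\<lambda>k. if k = i then 1 else 0) n j)"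
proof (rule OLS_eqI[OF n])
  define b where "b i = OLS m mu1 x (\<lambda>k. if k = i then 1 else 0) n" for i
  have b: "(\<forall>j\<ge>npar. b i j = 0) \<and> normal_eqs n (\<lambda>k. if k = i then 1 else 0) (b i)" for i
    unfolding b_def by (rule OLS_normal_eqs[OF n])
  then show "\<forall>j\<ge>npar. (\<Sum>i=1..n. y i * b i j) = 0" by simp
  have unit: "(\<Sum>k=1..n. design l k * fit (b i) k) = design l i" if "l < npar" "i \<in> {1..n}" for l i
  proof -
    have "(\<Sum>k=1..n. design l k * ((if k = i then 1 else 0) - fit (b i) k)) = 0"
      using b[of i] that unfolding normal_eqs_def by blast
    then have "(\<Sum>k=1..n. design l k * fit (b i) k) = (\<Sum>k=1..n. design l k * (if k = i then 1 else 0))"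
      by (simp add: right_diff_distrib sum_subtractf)
    also have "\<dots> = design l i" using that by (simp add: if_distrib cong: if_cong)
    finally show ?thesis .
  qed
  have "fit (\<lambda>j. \<Sum>i=1..n. y i * b i j) k = (\<Sum>i=1..n. y i * fit (b i) k)" for k
    unfolding fit_def sum_distrib_right sum_distrib_left by (subst sum.swap) (simp add: mult_ac)
  then have "(\<Sum>k=1..n. design l k * fit (\<lambda>j. \<Sum>i=1..n. y i * b i j) k) = (\<Sum>i=1..n. y i * design l i)"
    if "l < npar" for l
    using unit[OF that] by (simp add: sum_distrib_left, subst sum.swap) (simp add: mult_ac sum_distrib_left[symmetric])
  then show "normal_eqs n y (\<lambda>j. \<Sum>i=1..n. y i * b i j)"
    unfolding normal_eqs_def by (simp add: right_diff_distrib sum_subtractf mult.commute)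
qed

text \<open>The normal equations make the fitted error orthogonal to the residual, so its energy equals
  its correlation with the noise.\<close>

lemma OLS_error_identity:
  assumes n: "n \<ge> npar" and y: "\<forall>k\<in>{1..n}. y k = fit \<beta> k + d k"
  defines "e \<equiv> \<lambda>j. OLS m mu1 x y n j - \<beta> j"
  shows "(\<Sum>k=1..n. (fit e k)\<^sup>2) = (\<Sum>k=1..n. fit e k * d k)"
proof -
  have residual: "y k - fit (OLS m mu1 x y n) k = d k - fit e k" if "k \<in> {1..n}" for k
    using y that fit_diff[of "OLS m mu1 x y n" k \<beta>] unfolding e_def by simp
  have "(\<Sum>k=1..n. design l k * (d k - fit e k)) = 0" if "l < npar" for l
  proof -
    have "(\<Sum>k=1..n. design l k * (d k - fit e k)) = (\<Sum>k=1..n. design l k * (y k - fit (OLS m mu1 x y n) k))"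
      by (rule sum.cong) (simp_all add: residual)
    also have "\<dots> = 0" using OLS_normal_eqs[OF n] that unfolding normal_eqs_def by blast
    finally show ?thesis .
  qed
  then have "(\<Sum>k=1..n. fit e k * (d k - fit e k)) = 0"
    unfolding sum_fit_mult_eq by simp
  then show ?thesis by (simp add: right_diff_distrib sum_subtractf power2_eq_square)
qed

lemma fit_param_vec:
  "fit (param_vec m bk s \<alpha> \<gamma>) i
    = bk + s * x i + (\<Sum>j=1..m. \<alpha> j * cos (mu1 * real j * x i) - \<gamma> j * sin (mu1 * real j * x i))"
proof -
  let ?b = "param_vec m bk s \<alpha> \<gamma>"
  have cosines: "(\<Sum>l\<in>{2..<m+2}. ?b l * design l i) = (\<Sum>j=1..m. \<alpha> j * cos (mu1 * real j * x i))"
  proof -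
    have "(\<Sum>l\<in>{2..<m+2}. ?b l * design l i) = (\<Sum>j\<in>{1..<m+1}. ?b (j+1) * design (j+1) i)"
      using sum.shift_bounds_nat_ivl[of "\<lambda>l. ?b l * design l i" 1 1 "m+1"] by (simp add: numeral_2_eq_2)
    then show ?thesis by (simp add: atLeastLessThanSuc_atLeastAtMost param_vec_def design_def regressor_def)
  qed
  have sines: "(\<Sum>l\<in>{m+2..<npar}. ?b l * design l i) = (\<Sum>j=1..m. - (\<gamma> j * sin (mu1 * real j * x i)))"
  proof -
    have e: "{m+2..<npar} = {1 + (m+1)..<(m+1) + (m+1)}" unfolding npar_def by auto
    have "(\<Sum>l\<in>{m+2..<npar}. ?b l * design l i) = (\<Sum>j\<in>{1..<m+1}. ?b (j+(m+1)) * design (j+(m+1)) i)"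
      unfolding e by (rule sum.shift_bounds_nat_ivl)
    also have "\<dots> = (\<Sum>j\<in>{1..<m+1}. - (\<gamma> j * sin (mu1 * real j * x i)))"
      by (intro sum.cong refl) (auto simp: param_vec_def design_def regressor_def)
    finally show ?thesis by (simp add: atLeastLessThanSuc_atLeastAtMost)
  qed
  have "(\<Sum>l\<in>{2..<npar}. ?b l * design l i)
      = (\<Sum>l\<in>{2..<m+2}. ?b l * design l i) + (\<Sum>l\<in>{m+2..<npar}. ?b l * design l i)"
    by (rule sum.atLeastLessThan_concat[symmetric]) (auto simp: npar_def)
  then show ?thesis
    unfolding fit_def sum_lessThan_split_01[OF npar_ge_2] cosines sines
    by (simp add: param_vec_def design_0 design_1 sum.distrib[symmetric])
qed

section \<open>Consistency\<close>

lemma scale_square_ge: "1 \<le> a * real n \<Longrightarrow> real n \<le> (scale n l)\<^sup>2"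
proof -
  assume "1 \<le> a * real n"
  then have "1 * real n \<le> (a * real n)\<^sup>2 * real n" by (intro mult_right_mono) (simp_all add: one_le_power)
  then show ?thesis by (simp add: scale_def power_mult_distrib)
qed

text \<open>With \<open>v\<^sub>l = e\<^sub>l s\<^sub>l\<close> and \<open>w\<^sub>l = Z\<^sub>l / s\<^sub>l\<close> (\<open>Z\<^sub>l\<close> the correlation of column \<open>l\<close> with the
  noise), the error identity and the conditioning bound give
  \<open>|v|\<^sup>2/40 \<le> \<langle>v, w\<rangle> \<le> |v|\<^sup>2/80 + 20 |w|\<^sup>2\<close>.\<close>

lemma OLS_error_le:
  assumes n: "n \<ge> npar" "1 \<le> a * real n"
    and cond: "\<And>e. (1/40) * (\<Sum>l<npar. (e l * scale n l)\<^sup>2) \<le> (\<Sum>i=1..n. (fit e i)\<^sup>2)"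
    and y: "\<forall>k\<in>{1..n}. y k = fit \<beta> k + d k"
  shows "(\<Sum>j<npar. (OLS m mu1 x y n j - \<beta> j)\<^sup>2)
    \<le> 1600 / real n * (\<Sum>l<npar. (\<Sum>k=1..n. design l k * d k)\<^sup>2 / (scale n l)\<^sup>2)"
proof -
  have "n > 0" using n(1) npar_ge_2 by simp
  then have scale_pos': "scale n l > 0" for l by (rule scale_pos)
  define e where "e j = OLS m mu1 x y n j - \<beta> j" for j
  define v where "v l = e l * scale n l" for l
  define w where "w l = (\<Sum>k=1..n. design l k * d k) / scale n l" for l
  define V where "V = (\<Sum>l<npar. (v l)\<^sup>2)"
  have "(\<Sum>k=1..n. (fit e k)\<^sup>2) = (\<Sum>l<npar. e l * (\<Sum>k=1..n. design l k * d k))"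
    unfolding e_def OLS_error_identity[OF n(1) y] sum_fit_mult_eq ..
  also have "\<dots> = (\<Sum>l<npar. v l * w l)"
    using scale_pos' by (intro sum.cong refl) (simp add: v_def w_def less_imp_neq[symmetric])
  also have "\<dots> \<le> (\<Sum>l<npar. (v l)\<^sup>2 / 80 + 20 * (w l)\<^sup>2)"
  proof (intro sum_mono)
    fix l
    have "0 \<le> (v l - 40 * w l)\<^sup>2" by simp
    then show "v l * w l \<le> (v l)\<^sup>2 / 80 + 20 * (w l)\<^sup>2" by (simp add: power2_eq_square algebra_simps)
  qed
  also have "\<dots> = V / 80 + 20 * (\<Sum>l<npar. (w l)\<^sup>2)"
    unfolding V_def by (simp add: sum.distrib sum_divide_distrib sum_distrib_left)
  finally have "(\<Sum>k=1..n. (fit e k)\<^sup>2) \<le> V / 80 + 20 * (\<Sum>l<npar. (w l)\<^sup>2)" .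
  moreover have "V / 40 \<le> (\<Sum>k=1..n. (fit e k)\<^sup>2)"
    using cond[of e] unfolding V_def v_def by simp
  ultimately have V: "V \<le> 1600 * (\<Sum>l<npar. (w l)\<^sup>2)" by linarith
  have "(\<Sum>j<npar. (e j)\<^sup>2) \<le> (\<Sum>l<npar. (v l)\<^sup>2 / real n)"
  proof (intro sum_mono)
    fix l
    have "real n * (e l)\<^sup>2 \<le> (scale n l)\<^sup>2 * (e l)\<^sup>2"
      using scale_square_ge[OF n(2)] by (intro mult_right_mono) simp_all
    then show "(e l)\<^sup>2 \<le> (v l)\<^sup>2 / real n"
      using \<open>n > 0\<close> unfolding v_def by (simp add: field_simps power_mult_distrib)
  qed
  also have "\<dots> \<le> 1600 * (\<Sum>l<npar. (w l)\<^sup>2) / real n"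
    using V \<open>n > 0\<close> unfolding V_def by (simp add: sum_divide_distrib[symmetric] divide_right_mono)
  finally show ?thesis unfolding e_def w_def by (simp add: power_divide)
qed

lemma OLS_error_bound:
  "\<exists>N\<ge>npar. \<forall>n\<ge>N. \<forall>y \<beta> d. (\<forall>k\<in>{1..n}. y k = fit \<beta> k + d k) \<longrightarrow>
     (\<Sum>j<npar. (OLS m mu1 x y n j - \<beta> j)\<^sup>2)
       \<le> 1600 / real n * (\<Sum>l<npar. (\<Sum>k=1..n. design l k * d k)\<^sup>2 / (scale n l)\<^sup>2)"
proof -
  obtain N where N: "\<forall>n\<ge>N. \<forall>e. (\<Sum>i=1..n. (fit e i)\<^sup>2) \<ge> (1/40) * (\<Sum>l<npar. (e l * scale n l)\<^sup>2)"
    using sum_fit_square_ge_eventually by blast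
  define N1 where "N1 = max (max N npar) (nat \<lceil>1/a\<rceil>)"
  have large: "1 \<le> a * real n" if "n \<ge> N1" for n
  proof -
    have "1 / a \<le> real n" using that unfolding N1_def by linarith
    then show ?thesis using a_pos by (simp add: field_simps)
  qed
  show ?thesis
  proof (intro exI[of _ N1] conjI allI impI)
    show "npar \<le> N1" unfolding N1_def by simp
    fix n y \<beta> d assume n: "N1 \<le> n" and y: "\<forall>k\<in>{1..n}. y k = fit \<beta> k + d k"
    show "(\<Sum>j<npar. (OLS m mu1 x y n j - \<beta> j)\<^sup>2)
       \<le> 1600 / real n * (\<Sum>l<npar. (\<Sum>k=1..n. design l k * d k)\<^sup>2 / (scale n l)\<^sup>2)"
      using n N large[OF n] by (intro OLS_error_le[OF _ _ _ y]) (auto simp: N1_def)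
  qed
qed

definition noise_energy :: "nat \<Rightarrow> (nat \<Rightarrow> 'a \<Rightarrow> real) \<Rightarrow> 'a \<Rightarrow> real" where
  "noise_energy n \<delta> \<omega> = (\<Sum>l<npar. (\<Sum>k=1..n. design l k * \<delta> k \<omega>)\<^sup>2 / (scale n l)\<^sup>2)"

lemma noise_energy_nonneg: "0 \<le> noise_energy n \<delta> \<omega>"
  unfolding noise_energy_def by (intro sum_nonneg divide_nonneg_nonneg) simp_all

lemma integral_noise_energy_le:
  fixes \<delta> :: "nat \<Rightarrow> 'a \<Rightarrow> real"
  assumes "\<forall>k\<ge>1. \<delta> k \<in> borel_measurable M"
    and "\<forall>k\<ge>1. (\<integral>\<omega>. \<delta> k \<omega> \<partial>M) = 0"
    and "\<forall>k\<ge>1. integrable M (\<lambda>\<omega>. (\<delta> k \<omega>)\<^sup>2)"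
    and eig: "\<And>\<nu>. eigenvalue (cov_mat M \<delta> n) \<nu> \<Longrightarrow> \<nu> \<le> C"
  shows "integrable M (noise_energy n \<delta>)"
    and "(\<integral>\<omega>. noise_energy n \<delta> \<omega> \<partial>M) \<le> max C 0 * (\<Sum>l<npar. ngram n l l)"
proof -
  note moments = integral_square_sum_le_cov_eigenvalue_bound[of \<delta> M n "max C 0" "design l" for l]
  have eig': "\<And>\<nu>. eigenvalue (cov_mat M \<delta> n) \<nu> \<Longrightarrow> \<nu> \<le> max C 0" using eig by fastforce
  show "integrable M (noise_energy n \<delta>)" unfolding noise_energy_def using moments assms eig' by auto
  have "(\<integral>\<omega>. noise_energy n \<delta> \<omega> \<partial>M)
      = (\<Sum>l<npar. (\<integral>\<omega>. (\<Sum>k=1..n. design l k * \<delta> k \<omega>)\<^sup>2 \<partial>M) / (scale n l)\<^sup>2)"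
    unfolding noise_energy_def using moments assms eig' by (subst Bochner_Integration.integral_sum) auto
  also have "\<dots> \<le> (\<Sum>l<npar. max C 0 * gram n l l / (scale n l)\<^sup>2)"
    using moments(2) assms eig' by (intro sum_mono divide_right_mono) (auto simp: gram_def power2_eq_square)
  also have "\<dots> = max C 0 * (\<Sum>l<npar. ngram n l l)"
    unfolding ngram_def by (simp add: sum_distrib_left power2_eq_square)
  finally show "(\<integral>\<omega>. noise_energy n \<delta> \<omega> \<partial>M) \<le> max C 0 * (\<Sum>l<npar. ngram n l l)" .
qed

lemma integral_noise_energy_eventually_le:
  fixes \<delta> :: "nat \<Rightarrow> 'a \<Rightarrow> real"
  assumes meas: "\<forall>k\<ge>1. \<delta> k \<in> borel_measurable M"
    and centred: "\<forall>k\<ge>1. (\<integral>\<omega>. \<delta> k \<omega> \<partial>M) = 0"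
    and sq: "\<forall>k\<ge>1. integrable M (\<lambda>\<omega>. (\<delta> k \<omega>)\<^sup>2)"
    and eig: "\<forall>n\<ge>1. \<forall>\<nu>. eigenvalue (cov_mat M \<delta> n) \<nu> \<longrightarrow> \<nu> \<le> C"
  shows "\<exists>N. \<forall>n\<ge>N. integrable M (noise_energy n \<delta>)
           \<and> (\<integral>\<omega>. noise_energy n \<delta> \<omega> \<partial>M) \<le> max C 0 * (2 * real npar)"
proof -
  have "\<forall>\<^sub>F n in sequentially. \<forall>l\<in>{..<npar}. ngram n l l < 2"
    by (intro eventually_ball_finite ballI order_tendstoD(2)[OF ngram_tendsto]) (auto simp: ngram_lim_def)
  then obtain N where N: "\<And>n l. n \<ge> N \<Longrightarrow> l < npar \<Longrightarrow> ngram n l l < 2"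
    by (auto simp: eventually_sequentially)
  have "integrable M (noise_energy n \<delta>) \<and> (\<integral>\<omega>. noise_energy n \<delta> \<omega> \<partial>M) \<le> max C 0 * (2 * real npar)"
    if "n \<ge> max N 1" for n
  proof -
    have eig_n: "\<And>\<nu>. eigenvalue (cov_mat M \<delta> n) \<nu> \<Longrightarrow> \<nu> \<le> C" using eig that by auto
    have "(\<Sum>l<npar. ngram n l l) \<le> (\<Sum>l<npar. 2)" using N that by (intro sum_mono) (auto intro: less_imp_le)
    then have "max C 0 * (\<Sum>l<npar. ngram n l l) \<le> max C 0 * (2 * real npar)"
      by (intro mult_left_mono) simp_all
    moreover note integral_noise_energy_le[OF meas centred sq, of n C, OF eig_n]
    ultimately show ?thesis by (auto intro: order_trans)
  qed
  then show ?thesis by blast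
qed
lemma OLS_dist_measurable:
  assumes n: "n \<ge> npar" and y: "\<forall>i\<ge>1. y i \<in> borel_measurable M"
  shows "(\<lambda>\<omega>. pdist m (OLS m mu1 x (\<lambda>i. y i \<omega>) n) \<beta>) \<in> borel_measurable M"
proof -
  define c where "c i j = OLS m mu1 x (\<lambda>k. if k = i then 1 else 0) n j" for i j
  have "(\<lambda>\<omega>. pdist m (OLS m mu1 x (\<lambda>i. y i \<omega>) n) \<beta>)
      = (\<lambda>\<omega>. sqrt (\<Sum>j<2*m+2. ((\<Sum>i=1..n. y i \<omega> * c i j) - \<beta> j)\<^sup>2))"
    unfolding pdist_def c_def by (subst OLS_linear[OF n]) (rule refl)
  also have "\<dots> \<in> borel_measurable M"
    using y unfolding power2_eq_square
    by (intro measurable_compose[OF _ borel_measurable_sqrt] borel_measurable_sum borel_measurable_times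
        borel_measurable_diff borel_measurable_const) auto
  finally show ?thesis .
qed

lemma prob_OLS_dist_gt_le:
  fixes \<delta> y :: "nat \<Rightarrow> 'a \<Rightarrow> real"
  assumes "prob_space M"
    and y: "\<forall>i \<omega>. y i \<omega> = fit \<beta> i + \<delta> i \<omega>"
    and meas: "\<forall>k\<ge>1. \<delta> k \<in> borel_measurable M"
    and centred: "\<forall>k\<ge>1. (\<integral>\<omega>. \<delta> k \<omega> \<partial>M) = 0"
    and sq: "\<forall>k\<ge>1. integrable M (\<lambda>\<omega>. (\<delta> k \<omega>)\<^sup>2)"
    and eig: "\<forall>n\<ge>1. \<forall>\<nu>. eigenvalue (cov_mat M \<delta> n) \<nu> \<longrightarrow> \<nu> \<le> C"
    and "\<epsilon> > 0"
  shows "\<exists>N K. \<forall>n\<ge>N. measure M {\<omega>\<in>space M. pdist m (OLS m mu1 x (\<lambda>i. y i \<omega>) n) \<beta> > \<epsilon>} \<le> K / real n"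
proof -
  interpret prob_space M by fact
  obtain N1 where N1: "N1 \<ge> npar" "\<forall>n\<ge>N1. \<forall>y \<beta> d. (\<forall>k\<in>{1..n}. y k = fit \<beta> k + d k) \<longrightarrow>
      (\<Sum>j<npar. (OLS m mu1 x y n j - \<beta> j)\<^sup>2)
        \<le> 1600 / real n * (\<Sum>l<npar. (\<Sum>k=1..n. design l k * d k)\<^sup>2 / (scale n l)\<^sup>2)"
    using OLS_error_bound by blast
  obtain N2 where N2: "\<forall>n\<ge>N2. integrable M (noise_energy n \<delta>)
      \<and> (\<integral>\<omega>. noise_energy n \<delta> \<omega> \<partial>M) \<le> max C 0 * (2 * real npar)"
    using integral_noise_energy_eventually_le[OF meas centred sq eig] by blast
  define K where "K = 1600 * (max C 0 * (2 * real npar)) / \<epsilon>\<^sup>2"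
  have "measure M {\<omega>\<in>space M. pdist m (OLS m mu1 x (\<lambda>i. y i \<omega>) n) \<beta> > \<epsilon>} \<le> K / real n"
    if n: "n \<ge> max N1 N2" for n
  proof -
    have "n > 0" using n N1(1) npar_ge_2 by auto
    have "(pdist m (OLS m mu1 x (\<lambda>i. y i \<omega>) n) \<beta>)\<^sup>2 \<le> 1600 / real n * noise_energy n \<delta> \<omega>" for \<omega>
    proof -
      have "(pdist m (OLS m mu1 x (\<lambda>i. y i \<omega>) n) \<beta>)\<^sup>2 = (\<Sum>j<npar. (OLS m mu1 x (\<lambda>i. y i \<omega>) n j - \<beta> j)\<^sup>2)"
        unfolding pdist_def npar_def by (simp add: sum_nonneg)
      also have "\<dots> \<le> 1600 / real n * noise_energy n \<delta> \<omega>"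
        unfolding noise_energy_def using N1(2) n y by simp
      finally show ?thesis .
    qed
    then have "measure M {\<omega>\<in>space M. pdist m (OLS m mu1 x (\<lambda>i. y i \<omega>) n) \<beta> > \<epsilon>}
        \<le> (\<integral>\<omega>. 1600 / real n * noise_energy n \<delta> \<omega> \<partial>M) / \<epsilon>\<^sup>2"
      using N2 n \<open>\<epsilon> > 0\<close> \<open>n > 0\<close>
      by (intro measure_gt_le_integral_div_square) (auto intro!: divide_nonneg_nonneg mult_nonneg_nonneg noise_energy_nonneg)
    also have "\<dots> \<le> K / real n"
      using N2 n \<open>\<epsilon> > 0\<close> \<open>n > 0\<close> unfolding K_def by (simp add: field_simps)
    finally show ?thesis .
  qed
  then show ?thesis by blast
qed

lemma OLS_weakly_consistent:
  fixes \<delta> y :: "nat \<Rightarrow> 'a \<Rightarrow> real"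
  assumes "prob_space M"
    and y: "\<forall>i \<omega>. y i \<omega> = fit \<beta> i + \<delta> i \<omega>"
    and meas: "\<forall>k\<ge>1. \<delta> k \<in> borel_measurable M"
    and "\<forall>k\<ge>1. (\<integral>\<omega>. \<delta> k \<omega> \<partial>M) = 0"
    and "\<forall>k\<ge>1. integrable M (\<lambda>\<omega>. (\<delta> k \<omega>)\<^sup>2)"
    and "\<forall>n\<ge>1. \<forall>\<nu>. eigenvalue (cov_mat M \<delta> n) \<nu> \<longrightarrow> \<nu> \<le> C"
    and "\<epsilon> > 0"
  shows "\<forall>n\<ge>npar. {\<omega>\<in>space M. pdist m (OLS m mu1 x (\<lambda>i. y i \<omega>) n) \<beta> > \<epsilon>} \<in> sets M"
    and "(\<lambda>n. measure M {\<omega>\<in>space M. pdist m (OLS m mu1 x (\<lambda>i. y i \<omega>) n) \<beta> > \<epsilon>}) \<longlonglongrightarrow> 0"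
proof -
  have "y i = (\<lambda>\<omega>. fit \<beta> i + \<delta> i \<omega>)" for i
    using y by (simp add: fun_eq_iff)
  then have "\<forall>i\<ge>1. y i \<in> borel_measurable M"
    using meas by (auto intro!: borel_measurable_add)
  then show "\<forall>n\<ge>npar. {\<omega>\<in>space M. pdist m (OLS m mu1 x (\<lambda>i. y i \<omega>) n) \<beta> > \<epsilon>} \<in> sets M"
    using OLS_dist_measurable unfolding borel_measurable_iff_greater by blast
  obtain N K where "\<forall>n\<ge>N. measure M {\<omega>\<in>space M. pdist m (OLS m mu1 x (\<lambda>i. y i \<omega>) n) \<beta> > \<epsilon>} \<le> K / real n"
    using prob_OLS_dist_gt_le[OF assms] by blast
  then show "(\<lambda>n. measure M {\<omega>\<in>space M. pdist m (OLS m mu1 x (\<lambda>i. y i \<omega>) n) \<beta> > \<epsilon>}) \<longlonglongrightarrow> 0"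
    by (intro Lim_null_comparison[OF _ lim_const_over_n[of K]]) (auto simp: eventually_sequentially)
qed

end

theorem mainTheorem9:
  fixes M :: "'a measure" and m :: nat and h0 a0 a bk s :: real
    and \<alpha> \<gamma> :: "nat \<Rightarrow> real" and \<delta> :: "nat \<Rightarrow> 'a \<Rightarrow> real"
    and x :: "nat \<Rightarrow> real" and y :: "nat \<Rightarrow> 'a \<Rightarrow> real" and mu1 :: real
  assumes "prob_space M"
    and "h0 > 0" and "mu1 = 2 * pi / h0"
    and "a0 \<ge> 0" and "a > 0"
    and "\<forall>j\<in>{1..2*m}. a * real j / h0 \<notin> \<int>"
    and "\<forall>i. x i = a0 + a * real i"
    and "\<forall>i \<omega>. y i \<omega> = bk + s * x i
           + (\<Sum>j=1..m. \<alpha> j * cos (mu1 * real j * x i) - \<gamma> j * sin (mu1 * real j * x i))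
           + \<delta> i \<omega>"
    and "\<forall>i\<ge>1. \<delta> i \<in> borel_measurable M"
    and "\<forall>i\<ge>1. integrable M (\<delta> i) \<and> (\<integral>\<omega>. \<delta> i \<omega> \<partial>M) = 0"
    and "\<forall>i\<ge>1. integrable M (\<lambda>\<omega>. (\<delta> i \<omega>)\<^sup>2) \<and> (\<integral>\<omega>. (\<delta> i \<omega>)\<^sup>2 \<partial>M) > 0"
    and "\<exists>c>0. \<forall>n\<ge>1. \<forall>\<nu>. eigenvalue (cov_mat M \<delta> n) \<nu> \<longrightarrow> c \<le> \<nu>"
    and "\<exists>C. \<forall>n\<ge>1. \<forall>\<nu>. eigenvalue (cov_mat M \<delta> n) \<nu> \<longrightarrow> \<nu> \<le> C"
  shows "\<forall>\<epsilon>>0.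
           (\<forall>n\<ge>2*m+2. {\<omega>\<in>space M. pdist m (OLS m mu1 x (\<lambda>i. y i \<omega>) n) (param_vec m bk s \<alpha> \<gamma>) > \<epsilon>} \<in> sets M)
         \<and> ((\<lambda>n. measure M {\<omega>\<in>space M. pdist m (OLS m mu1 x (\<lambda>i. y i \<omega>) n) (param_vec m bk s \<alpha> \<gamma>) > \<epsilon>})
              \<longlonglongrightarrow> 0)"
proof -
  interpret trig_design m mu1 h0 a0 a x
    using assms(2,3,5-7) by unfold_locales auto
  obtain C where C: "\<forall>n\<ge>1. \<forall>\<nu>. eigenvalue (cov_mat M \<delta> n) \<nu> \<longrightarrow> \<nu> \<le> C"
    using assms(13) by blast
  have "\<forall>i \<omega>. y i \<omega> = fit (param_vec m bk s \<alpha> \<gamma>) i + \<delta> i \<omega>"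
    using assms(8) by (simp add: fit_param_vec)
  from OLS_weakly_consistent[OF assms(1) this assms(9) _ _ C] assms(10,11) show ?thesis
    unfolding npar_def by blast
qed

end
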